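(* Assume that $\kappa_{\mathcal H}(X_i,X_i)<\infty$ almost surely for every $i$, and that for every $y\in\mathcal Y$ the map $u\mapsto\ell(y,u)$ is convex and twice continuously differentiable with $u\mapsto\partial_2\ell(y,u)$ being $\beta_{\ell;2}$-Lipschitz continuous. Then for every $z'\in\mathcal Y$, $\mathbf I_{\hat f}(X_{n+1},z')=\sum_{i=1}^{n+1}[I_{\hat f}(X_{n+1},z')]_iK_{X_i}$, where $$I_{\hat f}(X_{n+1},z')=-\frac1{n+1}\partial_2\ell\big(z',\hat a_\lambda(\mathbf u)^TK_{\bullet,n+1}\big)\big[\nabla_2^2\hat R_\lambda(\mathbf u;\hat a_\lambda(\mathbf u))\big]^+K_{\bullet,n+1}\in\mathbb R^{n+1},$$ and $\hat a_\lambda(\mathbf u)$ is the unique minimizer of $a\mapsto\hat R_\lambda(\mathbf u;a)$ in the range of $K$.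
   Context: Data $D=\{(X_1,Y_1),\dots,(X_n,Y_n)\}\subset\mathcal X\times\mathcal Y$ ($\mathcal X\subset\mathbb R^d$, $\mathcal Y\subset\mathbb R$) and $X_{n+1}$; $\mathcal H$ an RKHS with kernel $\kappa_{\mathcal H}$, $K_x=\kappa_{\mathcal H}(x,\cdot)$, Gram matrix $K=(\kappa_{\mathcal H}(X_i,X_j))_{1\le i,j\le n+1}$ with $j$-th column $K_{\bullet,j}$, $\mathcal A=\mathrm{span}\{K_{X_1},\dots,K_{X_{n+1}}\}$. Loss $\ell$, derivatives $\partial_2,\partial_2^2$ in its second argument, $\lambda>0$, fixed $y,z\in\mathcal Y$, $\mathbf u=(1,\dots,1,1,0)\in\mathbb R^{n+2}$. For $v\in\mathbb R^{n+2}$, $f\in\mathcal H$: $\hat{\mathbf R}_\lambda(v;f)=\frac1{n+1}\sum_{i=1}^nv_i\ell(Y_i,f(X_i))+\frac{v_{n+1}}{n+1}\ell(z,f(X_{n+1}))+\frac{v_{n+2}}{n+1}\ell(y,f(X_{n+1}))+\lambda\|f\|_{\mathcal H}^2$, and for $a\in\mathbb R^{n+1}$: $\hat R_\lambda(v;a)=\hat{\mathbf R}_\lambda(v;\sum_ia_iK_{X_i})=\frac1{n+1}\sum_{i=1}^nv_i\ell(Y_i,a^TK_{\bullet,i})+\frac{v_{n+1}}{n+1}\ell(z,a^TK_{\bullet,n+1})+\frac{v_{n+2}}{n+1}\ell(y,a^TK_{\bullet,n+1})+\lambda a^TKa$; $\nabla^2_2\hat R_\lambda(v;a)$ is its Hessian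 in $a$, and $[\cdot]^+$ its inverse on the range of $K$ (Moore–Penrose pseudo-inverse). $\hat f_{\lambda;D^z}$ is the minimizer of $\hat{\mathbf R}_\lambda(\mathbf u;\cdot)$ over $\mathcal H$. The operator $\partial_2^2\hat{\mathbf R}_\lambda(v;f)=\frac1{n+1}\sum_{i=1}^nv_i\partial_2^2\ell(Y_i,f(X_i))K_{X_i}\otimes K_{X_i}+\frac{v_{n+1}}{n+1}\partial_2^2\ell(z,f(X_{n+1}))K_{X_{n+1}}\otimes K_{X_{n+1}}+\frac{v_{n+2}}{n+1}\partial_2^2\ell(y,f(X_{n+1}))K_{X_{n+1}}\otimes K_{X_{n+1}}+2\lambda\mathrm{Id}$ (with $(g\otimes g)h=\langle g,h\rangle_{\mathcal H}g$) is the second Fréchet differential of $\hat{\mathbf R}_\lambda(v;\cdot)$, and $[\cdot]^+$ is the inverse of its restriction to $\mathcal A$. Finally $\mathbf I_{\hat f}(X_{n+1},z')=-\frac1{n+1}\partial_2\ell(z',\hat f_{\lambda;D^z}(X_{n+1}))[\partial_2^2\hat{\mathbf R}_\lambda(\mathbf u;\hat f_{\lambda;D^z})]^+K_{X_{n+1}}$. *)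

theory Defs
  imports "HOL-Analysis.Convex" "HOL-Analysis.Lipschitz" "Jordan_Normal_Form.Matrix"
begin

(* Conventions.
   - The RKHS H is modelled abstractly as a real Hilbert space 'h together with the
     canonical feature map Kx : 'x => 'h, Kx x = kappa_H(x, .).  The reproducing
     property is built in: the value of f in H at x is  f(x) = <f, Kx x>_H.
   - Data are 1-based: X 1, ..., X (n+1) and Y 1, ..., Y n; weight vectors
     v in R^(n+2) are functions nat => real indexed 1..n+2.
   - Finite-dimensional vectors/matrices use Jordan_Normal_Form ('a vec, 'a mat),
     which are 0-based: row/column j of the Gram matrix corresponds to X (j+1). *)

definition evalH :: "'h::real_inner \<Rightarrow> ('x \<Rightarrow> 'h) \<Rightarrow> 'x \<Rightarrow> real" where
  "evalH f Kx x = inner f (Kx x)"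

definition kern :: "('x \<Rightarrow> 'h::real_inner) \<Rightarrow> 'x \<Rightarrow> 'x \<Rightarrow> real" where
  "kern Kx x x' = inner (Kx x) (Kx x')"

definition gram :: "('x \<Rightarrow> 'h::real_inner) \<Rightarrow> (nat \<Rightarrow> 'x) \<Rightarrow> nat \<Rightarrow> real mat" where
  "gram Kx X n = mat (n+1) (n+1) (\<lambda>(i,j). kern Kx (X (i+1)) (X (j+1)))"

definition uvec :: "nat \<Rightarrow> nat \<Rightarrow> real" where
  "uvec n i = (if i = n + 2 then 0 else 1)"

definition Rhat :: "(real \<Rightarrow> real \<Rightarrow> real) \<Rightarrow> real \<Rightarrow> nat \<Rightarrow> (nat \<Rightarrow> 'x) \<Rightarrow> (nat \<Rightarrow> real)
     \<Rightarrow> ('x \<Rightarrow> 'h::real_inner) \<Rightarrow> real \<Rightarrow> real \<Rightarrow> (nat \<Rightarrow> real) \<Rightarrow> real vec \<Rightarrow> real" where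
  "Rhat l lam n X Y Kx y z v a =
     (let K = gram Kx X n in
       (1 / real (n+1)) * (\<Sum>i=1..n. v i * l (Y i) (scalar_prod a (col K (i-1))))
       + v (n+1) / real (n+1) * l z (scalar_prod a (col K n))
       + v (n+2) / real (n+1) * l y (scalar_prod a (col K n))
       + lam * scalar_prod a (K *\<^sub>v a))"

definition Rbold :: "(real \<Rightarrow> real \<Rightarrow> real) \<Rightarrow> real \<Rightarrow> nat \<Rightarrow> (nat \<Rightarrow> 'x) \<Rightarrow> (nat \<Rightarrow> real)
     \<Rightarrow> ('x \<Rightarrow> 'h::real_inner) \<Rightarrow> real \<Rightarrow> real \<Rightarrow> (nat \<Rightarrow> real) \<Rightarrow> 'h \<Rightarrow> real" where
  "Rbold l lam n X Y Kx y z v f =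
       (1 / real (n+1)) * (\<Sum>i=1..n. v i * l (Y i) (evalH f Kx (X i)))
       + v (n+1) / real (n+1) * l z (evalH f Kx (X (n+1)))
       + v (n+2) / real (n+1) * l y (evalH f Kx (X (n+1)))
       + lam * (norm f)\<^sup>2"

definition hessian :: "nat \<Rightarrow> (real vec \<Rightarrow> real) \<Rightarrow> real vec \<Rightarrow> real mat" where
  "hessian N g a = mat N N (\<lambda>(j,k).
      deriv (\<lambda>s. deriv (\<lambda>t. g (a + t \<cdot>\<^sub>v unit_vec N j + s \<cdot>\<^sub>v unit_vec N k)) 0) 0)"

definition mp_pinv :: "nat \<Rightarrow> real mat \<Rightarrow> real mat" where
  "mp_pinv N A = (THE B. B \<in> carrier_mat N N \<and> A * B * A = A \<and> B * A * B = B
                       \<and> transpose_mat (A * B) = A * B \<and> transpose_mat (B * A) = B * A)"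

definition mat_range :: "nat \<Rightarrow> real mat \<Rightarrow> real vec set" where
  "mat_range N K = {K *\<^sub>v c | c. c \<in> carrier_vec N}"

definition ahat :: "(real \<Rightarrow> real \<Rightarrow> real) \<Rightarrow> real \<Rightarrow> nat \<Rightarrow> (nat \<Rightarrow> 'x) \<Rightarrow> (nat \<Rightarrow> real)
     \<Rightarrow> ('x \<Rightarrow> 'h::real_inner) \<Rightarrow> real \<Rightarrow> real \<Rightarrow> real vec" where
  "ahat l lam n X Y Kx y z =
     (THE a. a \<in> mat_range (n+1) (gram Kx X n) \<and>
        (\<forall>b \<in> mat_range (n+1) (gram Kx X n).
            Rhat l lam n X Y Kx y z (uvec n) a \<le> Rhat l lam n X Y Kx y z (uvec n) b))"

definition Ivec :: "(real \<Rightarrow> real \<Rightarrow> real) \<Rightarrow> real \<Rightarrow> nat \<Rightarrow> (nat \<Rightarrow> 'x) \<Rightarrow> (nat \<Rightarrow> real)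
     \<Rightarrow> ('x \<Rightarrow> 'h::real_inner) \<Rightarrow> real \<Rightarrow> real \<Rightarrow> real \<Rightarrow> real vec" where
  "Ivec l lam n X Y Kx y z z' =
     (let K = gram Kx X n; a = ahat l lam n X Y Kx y z in
       (- (1 / real (n+1)) * deriv (l z') (scalar_prod a (col K n)))
         \<cdot>\<^sub>v (mp_pinv (n+1) (hessian (n+1) (Rhat l lam n X Y Kx y z (uvec n)) a) *\<^sub>v col K n))"

definition fhat :: "(real \<Rightarrow> real \<Rightarrow> real) \<Rightarrow> real \<Rightarrow> nat \<Rightarrow> (nat \<Rightarrow> 'x) \<Rightarrow> (nat \<Rightarrow> real)
     \<Rightarrow> ('x \<Rightarrow> 'h::real_inner) \<Rightarrow> real \<Rightarrow> real \<Rightarrow> 'h" where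
  "fhat l lam n X Y Kx y z =
     (THE f. \<forall>g. Rbold l lam n X Y Kx y z (uvec n) f \<le> Rbold l lam n X Y Kx y z (uvec n) g)"

(* second Frechet differential partial_2^2 bold \hat R_lambda(v; f), as an operator on H
   ((g (x) g) h = <g,h> g) *)
definition hess_op :: "(real \<Rightarrow> real \<Rightarrow> real) \<Rightarrow> real \<Rightarrow> nat \<Rightarrow> (nat \<Rightarrow> 'x) \<Rightarrow> (nat \<Rightarrow> real)
     \<Rightarrow> ('x \<Rightarrow> 'h::real_inner) \<Rightarrow> real \<Rightarrow> real \<Rightarrow> (nat \<Rightarrow> real) \<Rightarrow> 'h \<Rightarrow> 'h \<Rightarrow> 'h" where
  "hess_op l lam n X Y Kx y z v f h =
       (1 / real (n+1)) *\<^sub>R (\<Sum>i=1..n. (v i * deriv (deriv (l (Y i))) (evalH f Kx (X i))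
                                          * inner (Kx (X i)) h) *\<^sub>R Kx (X i))
       + (v (n+1) / real (n+1) * deriv (deriv (l z)) (evalH f Kx (X (n+1)))
            * inner (Kx (X (n+1))) h) *\<^sub>R Kx (X (n+1))
       + (v (n+2) / real (n+1) * deriv (deriv (l y)) (evalH f Kx (X (n+1)))
            * inner (Kx (X (n+1))) h) *\<^sub>R Kx (X (n+1))
       + (2 * lam) *\<^sub>R h"

(* [T]^+ h : inverse of the restriction of T to the subspace S, applied to h *)
definition restr_inv :: "('h \<Rightarrow> 'h) \<Rightarrow> 'h set \<Rightarrow> 'h \<Rightarrow> 'h" where
  "restr_inv T S h = (THE g. g \<in> S \<and> T g = h)"

definition Ibold :: "(real \<Rightarrow> real \<Rightarrow> real) \<Rightarrow> real \<Rightarrow> nat \<Rightarrow> (nat \<Rightarrow> 'x) \<Rightarrow> (nat \<Rightarrow> real)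
     \<Rightarrow> ('x \<Rightarrow> 'h::real_inner) \<Rightarrow> real \<Rightarrow> real \<Rightarrow> real \<Rightarrow> 'h" where
  "Ibold l lam n X Y Kx y z z' =
     (let f = fhat l lam n X Y Kx y z in
       (- (1 / real (n+1)) * deriv (l z') (evalH f Kx (X (n+1))))
         *\<^sub>R restr_inv (hess_op l lam n X Y Kx y z (uvec n) f)
                       (span (Kx ` X ` {1..n+1})) (Kx (X (n+1))))"

end

theory Submission
  imports Defs "Jordan_Normal_Form.Determinant" "HOL-Analysis.Borel_Space"
begin

lemma linear_inj_on_span_imp_onto:
  fixes T :: "'a::real_vector \<Rightarrow> 'a"
  assumes T: "linear T" and S: "finite S"
    and into: "T ` span S \<subseteq> span S" and inj: "inj_on T (span S)"
  shows "T ` span S = span S"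
proof
  obtain B where B: "B \<subseteq> span S" "independent B" "span S \<subseteq> span B"
    by (rule basis_exists)
  have span_B: "span B = span S"
    using B(3) span_minimal[OF B(1) subspace_span] by blast
  have B_fin: "finite B"
    using independent_span_bound[OF S B(2,1)] by simp
  have TB: "independent (T ` B)"
    using linear_independent_injective_image[OF T B(2)] inj span_B by simp
  have card_TB: "card (T ` B) = card B"
    using card_image[OF inj_on_subset[OF inj B(1)]] .
  have "span S \<subseteq> span (T ` B)"
  proof
    fix a assume a: "a \<in> span S"
    show "a \<in> span (T ` B)"
    proof (rule ccontr)
      assume a': "a \<notin> span (T ` B)"
      have "T ` B \<subseteq> span S"
        using B(1) into by blast
      hence "insert a (T ` B) \<subseteq> span B"
        using a span_B by simp
      hence "card (insert a (T ` B)) \<le> card B"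
        using independent_span_bound[OF B_fin independent_insertI[OF a' TB]] by simp
      moreover have "a \<notin> T ` B"
        using a' span_base[of a "T ` B"] by blast
      ultimately show False
        using card_TB B_fin by simp
    qed
  qed
  also have "\<dots> = T ` span S"
    using linear_span_image[OF T] span_B by simp
  finally show "span S \<subseteq> T ` span S" .
qed (fact into)

lemma orthogonal_to_span_eq_0:
  fixes h :: "'a::real_inner"
  assumes "h \<in> span S" and "\<And>s. s \<in> S \<Longrightarrow> inner s h = 0"
  shows "h = 0"
proof -
  have "real_inner_class.orthogonal h h"
    by (rule orthogonal_to_span[OF assms(1)])
      (use assms(2) in \<open>auto simp: real_inner_class.orthogonal_def inner_commute\<close>)
  thus ?thesis by (simp add: real_inner_class.orthogonal_def)
qed

definition frame_op :: "'i set \<Rightarrow> ('i \<Rightarrow> real) \<Rightarrow> ('i \<Rightarrow> 'h::real_inner) \<Rightarrow> 'h \<Rightarrow> 'h" where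
  "frame_op I c k h = (\<Sum>i\<in>I. (c i * inner (k i) h) *\<^sub>R k i)"

lemma linear_frame_op: "linear (frame_op I c k)"
  by (rule linearI)
    (simp_all add: frame_op_def algebra_simps sum.distrib scaleR_sum_right)

lemma frame_op_in_span: "frame_op I c k h \<in> span (k ` I)"
  unfolding frame_op_def by (intro span_sum span_scale span_base) auto

lemma inner_frame_op: "inner (frame_op I c k h) w = (\<Sum>i\<in>I. c i * inner (k i) h * inner (k i) w)"
  by (simp add: frame_op_def inner_sum_left)

lemma frame_op_onto_span:
  assumes I: "finite I" and c: "\<And>i. i \<in> I \<Longrightarrow> c i > 0"
  shows "frame_op I c k ` span (k ` I) = span (k ` I)"
proof (rule linear_inj_on_span_imp_onto[OF linear_frame_op])
  show "inj_on (frame_op I c k) (span (k ` I))"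
  proof (subst linear_inj_on_iff_eq_0[OF linear_frame_op subspace_span], intro ballI impI)
    fix h assume h: "h \<in> span (k ` I)" and "frame_op I c k h = 0"
    hence "(\<Sum>i\<in>I. c i * (inner (k i) h)\<^sup>2) = 0"
      using inner_frame_op[of I c k h h] by (simp add: power2_eq_square mult.assoc)
    hence "\<forall>i\<in>I. c i * (inner (k i) h)\<^sup>2 = 0"
      using I c by (subst sum_nonneg_eq_0_iff[symmetric]) (auto intro: mult_nonneg_nonneg simp: less_imp_le)
    hence "\<And>s. s \<in> k ` I \<Longrightarrow> inner s h = 0"
      using c by fastforce
    thus "h = 0" by (rule orthogonal_to_span_eq_0[OF h])
  qed
qed (use I frame_op_in_span in auto)

lemma orthogonal_projection_onto_span:
  fixes f :: "'h::real_inner"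
  assumes "finite I"
  obtains p where "p \<in> span (k ` I)" and "\<And>i. i \<in> I \<Longrightarrow> inner (k i) p = inner (k i) f"
proof -
  let ?F = "frame_op I (\<lambda>_. 1) k"
  have "?F f \<in> ?F ` span (k ` I)"
    using frame_op_onto_span[OF assms, of "\<lambda>_. 1" k] frame_op_in_span[of I "\<lambda>_. 1" k f] by simp
  then obtain p where p: "p \<in> span (k ` I)" and Fp: "?F p = ?F f"
    by (metis imageE)
  have "(\<Sum>i\<in>I. (inner (k i) (f - p))\<^sup>2) = inner (?F (f - p)) (f - p)"
    by (simp add: inner_frame_op power2_eq_square)
  also have "?F (f - p) = 0"
    using Fp linear_diff[OF linear_frame_op, of I "\<lambda>_. 1" k f p] by simp
  finally have "\<forall>i\<in>I. (inner (k i) (f - p))\<^sup>2 = 0"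
    using assms by (subst sum_nonneg_eq_0_iff[symmetric]) auto
  thus ?thesis using that[OF p] by (simp add: inner_diff_right)
qed

lemma strongly_midpoint_convex_min_unique:
  fixes F :: "'a::real_normed_vector \<Rightarrow> real"
  assumes mu: "mu > 0"
    and mid: "\<And>f g. F ((1/2) *\<^sub>R (f + g)) \<le> (F f + F g) / 2 - mu * (norm (f - g))\<^sup>2"
    and f: "\<forall>h. F f \<le> F h" and g: "\<forall>h. F g \<le> F h"
  shows "f = g"
proof -
  have "F f = F g"
    using f g by (meson order_antisym)
  moreover have "F f \<le> (F f + F g) / 2 - mu * (norm (f - g))\<^sup>2"
    using f mid order_trans by blast
  ultimately have "mu * (norm (f - g))\<^sup>2 \<le> 0"
    by simp
  thus ?thesis using mu by (simp add: mult_le_0_iff)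
qed

lemma strongly_midpoint_convex_has_min:
  fixes F :: "'a::{real_normed_vector, complete_space} \<Rightarrow> real"
  assumes mu: "mu > 0" and cont: "continuous_on UNIV F"
    and mid: "\<And>f g. F ((1/2) *\<^sub>R (f + g)) \<le> (F f + F g) / 2 - mu * (norm (f - g))\<^sup>2"
    and bdd: "bdd_below (range F)"
  obtains f where "\<forall>g. F f \<le> F g"
proof -
  define m where "m = Inf (range F)"
  define d :: "nat \<Rightarrow> real" where "d k = inverse (real (Suc k))" for k
  have m_le: "m \<le> F g" for g
    unfolding m_def by (rule cInf_lower[OF rangeI bdd])
  have "\<exists>f. F f < m + d k" for k
    using cInf_lessD[of "range F" "m + d k"] by (auto simp: m_def d_def)
  then obtain fs where fs: "\<And>k. F (fs k) < m + d k"
    by metis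
  \<comment> \<open>the midpoint of two almost-minimisers is still above \<open>m\<close>, so they must be close\<close>
  have close: "mu * (norm (fs j - fs k))\<^sup>2 < (d j + d k) / 2" for j k
    using m_le[of "(1/2) *\<^sub>R (fs j + fs k)"] mid[of "fs j" "fs k"] fs[of j] fs[of k] by argo
  have "Cauchy fs"
  proof (rule metric_CauchyI)
    fix e :: real assume e: "e > 0"
    obtain M where M: "d M < mu * e\<^sup>2"
      using reals_Archimedean[of "mu * e\<^sup>2"] mu e by (auto simp: d_def)
    have "dist (fs j) (fs k) < e" if "j \<ge> M" "k \<ge> M" for j k
    proof -
      have "d j \<le> d M" "d k \<le> d M"
        using that by (simp_all add: d_def le_imp_inverse_le)
      hence "mu * (norm (fs j - fs k))\<^sup>2 < mu * e\<^sup>2"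
        using close[of j k] M by argo
      hence "(norm (fs j - fs k))\<^sup>2 < e\<^sup>2"
        using mu by simp
      thus ?thesis using e by (simp add: dist_norm power2_less_imp_less)
    qed
    thus "\<exists>M. \<forall>j\<ge>M. \<forall>k\<ge>M. dist (fs j) (fs k) < e" by blast
  qed
  then obtain f where lim: "fs \<longlonglongrightarrow> f"
    using Cauchy_convergent_iff convergent_def by blast
  have "(\<lambda>k. F (fs k)) \<longlonglongrightarrow> F f"
    using cont lim by (metis continuous_on_tendsto_compose UNIV_I eventually_sequentiallyI)
  moreover have "(\<lambda>k. F (fs k)) \<longlonglongrightarrow> m"
  proof (rule tendsto_sandwich[of "\<lambda>_. m" _ _ "\<lambda>k. m + d k"])
    show "\<forall>\<^sub>F k in sequentially. m \<le> F (fs k)"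
      using m_le by simp
    show "\<forall>\<^sub>F k in sequentially. F (fs k) \<le> m + d k"
      using fs by (simp add: less_imp_le)
    show "(\<lambda>k. m + d k) \<longlonglongrightarrow> m"
      using tendsto_add[OF tendsto_const LIMSEQ_inverse_real_of_nat, of m] by (simp add: d_def)
  qed simp
  ultimately have "F f = m"
    by (rule LIMSEQ_unique)
  thus ?thesis using m_le by (intro that) auto
qed

lemma convex_on_UNIV_deriv_mono:
  fixes g :: "real \<Rightarrow> real"
  assumes g: "convex_on UNIV g" and g': "\<And>u. (g has_real_derivative deriv g u) (at u)"
  shows "mono (deriv g)"
proof (rule monoI)
  fix a b :: real assume "a \<le> b"
  have "g b - g a \<ge> deriv g a * (b - a)" "g a - g b \<ge> deriv g b * (a - b)"
    by (rule convex_on_imp_above_tangent[OF g]; use g' in simp)+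
  hence "deriv g a * (b - a) \<le> deriv g b * (b - a)"
    by (simp add: algebra_simps)
  thus "deriv g a \<le> deriv g b"
    using \<open>a \<le> b\<close> by (cases "a = b") simp_all
qed

lemma convex_on_UNIV_deriv2_nonneg:
  fixes g :: "real \<Rightarrow> real"
  assumes "convex_on UNIV g" and "\<And>u. (g has_real_derivative deriv g u) (at u)"
    and "(deriv g has_real_derivative D) (at x)"
  shows "0 \<le> D"
  using mono_on_imp_deriv_nonneg[of UNIV "deriv g"] convex_on_UNIV_deriv_mono[OF assms(1,2)] assms(3)
  by simp

definition reg_risk :: "'i set \<Rightarrow> ('i \<Rightarrow> real) \<Rightarrow> ('i \<Rightarrow> real \<Rightarrow> real) \<Rightarrow> ('i \<Rightarrow> 'h::real_inner)
    \<Rightarrow> real \<Rightarrow> 'h \<Rightarrow> real" where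
  "reg_risk I c g k lam f = (\<Sum>i\<in>I. c i * g i (inner f (k i))) + lam * (norm f)\<^sup>2"

locale convex_reg_risk =
  fixes I :: "'i set" and c :: "'i \<Rightarrow> real" and g :: "'i \<Rightarrow> real \<Rightarrow> real"
    and k :: "'i \<Rightarrow> 'h::real_inner" and lam :: real
  assumes finite_I: "finite I"
    and c_nonneg: "\<And>i. i \<in> I \<Longrightarrow> 0 \<le> c i"
    and convex_g: "\<And>i. i \<in> I \<Longrightarrow> convex_on UNIV (g i)"
    and g_deriv: "\<And>i u. i \<in> I \<Longrightarrow> (g i has_real_derivative deriv (g i) u) (at u)"
    and lam_pos: "0 < lam"
begin

abbreviation R :: "'h \<Rightarrow> real" where
  "R \<equiv> reg_risk I c g k lam"

lemma continuous_on_reg_risk: "continuous_on UNIV R"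
proof -
  have "continuous_on UNIV (\<lambda>f. g i (inner f (k i)))" if "i \<in> I" for i
    using continuous_on_compose2[OF convex_on_continuous[OF open_UNIV convex_g[OF that]],
        of UNIV "\<lambda>f. inner f (k i)"]
    by (simp add: continuous_on_inner)
  thus ?thesis
    unfolding reg_risk_def[abs_def] by (intro continuous_intros) auto
qed

lemma reg_risk_midpoint:
  "R ((1/2) *\<^sub>R (f + h)) \<le> (R f + R h) / 2 - lam / 4 * (norm (f - h))\<^sup>2"
proof -
  let ?m = "(1/2) *\<^sub>R (f + h)"
  have loss: "c i * g i (inner ?m (k i)) \<le> (c i * g i (inner f (k i)) + c i * g i (inner h (k i))) / 2"
    if "i \<in> I" for i
  proof -
    have cvx: "g i ((1/2) * inner f (k i) + (1/2) * inner h (k i))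
        \<le> (1/2) * g i (inner f (k i)) + (1/2) * g i (inner h (k i))"
      using convex_onD[OF convex_g[OF that], of "1/2" "inner f (k i)" "inner h (k i)"] by simp
    have mid: "inner ?m (k i) = (1/2) * inner f (k i) + (1/2) * inner h (k i)"
      by (simp add: inner_add_left)
    have "g i (inner ?m (k i)) \<le> (g i (inner f (k i)) + g i (inner h (k i))) / 2"
      unfolding mid using cvx by argo
    hence "c i * g i (inner ?m (k i)) \<le> c i * ((g i (inner f (k i)) + g i (inner h (k i))) / 2)"
      by (rule mult_left_mono[OF _ c_nonneg[OF that]])
    thus ?thesis by (simp add: add_divide_distrib distrib_left)
  qed
  have parallelogram: "(norm ?m)\<^sup>2 = ((norm f)\<^sup>2 + (norm h)\<^sup>2) / 2 - (norm (f - h))\<^sup>2 / 4"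
    by (simp add: power2_norm_eq_inner inner_add_left inner_add_right inner_diff_left
        inner_diff_right inner_commute field_simps)
  have "lam * (norm ?m)\<^sup>2 = (lam * (norm f)\<^sup>2 + lam * (norm h)\<^sup>2) / 2 - lam / 4 * (norm (f - h))\<^sup>2"
    unfolding parallelogram by (simp add: field_simps)
  moreover have "(\<Sum>i\<in>I. c i * g i (inner ?m (k i)))
      \<le> ((\<Sum>i\<in>I. c i * g i (inner f (k i))) + (\<Sum>i\<in>I. c i * g i (inner h (k i)))) / 2"
    using sum_mono[OF loss] by (simp add: sum.distrib sum_divide_distrib[symmetric])
  ultimately show ?thesis
    unfolding reg_risk_def by argo
qed

lemma reg_risk_bdd_below: "bdd_below (range R)"
proof -
  define w where "w = (\<Sum>i\<in>I. (c i * deriv (g i) 0) *\<^sub>R k i)"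
  define C where "C = (\<Sum>i\<in>I. c i * g i 0)"
  \<comment> \<open>each loss lies above its tangent at \<open>0\<close>, so \<open>R\<close> lies above a concave quadratic in \<open>norm f\<close>\<close>
  have tangent: "C + inner f w + lam * (norm f)\<^sup>2 \<le> R f" for f
  proof -
    have "c i * (g i 0 + deriv (g i) 0 * inner f (k i)) \<le> c i * g i (inner f (k i))" if "i \<in> I" for i
    proof -
      have "g i (inner f (k i)) - g i 0 \<ge> deriv (g i) 0 * (inner f (k i) - 0)"
        by (rule convex_on_imp_above_tangent[OF convex_g[OF that]]) (use g_deriv[OF that] in simp_all)
      thus ?thesis using c_nonneg[OF that] by (intro mult_left_mono) auto
    qed
    hence "(\<Sum>i\<in>I. c i * (g i 0 + deriv (g i) 0 * inner f (k i))) \<le> (\<Sum>i\<in>I. c i * g i (inner f (k i)))"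
      by (rule sum_mono)
    thus ?thesis
      by (simp add: reg_risk_def C_def w_def inner_sum_right algebra_simps sum.distrib)
  qed
  have "C - (norm w)\<^sup>2 / (4 * lam) \<le> R f" for f
  proof -
    have "0 \<le> (2 * lam * norm f - norm w)\<^sup>2 / (4 * lam)"
      using lam_pos by simp
    also have "\<dots> = lam * (norm f)\<^sup>2 - norm w * norm f + (norm w)\<^sup>2 / (4 * lam)"
      using lam_pos by (simp add: field_simps power2_eq_square)
    finally show ?thesis
      using tangent[of f] Cauchy_Schwarz_ineq2[of f w] by (smt (verit) norm_ge_zero mult.commute)
  qed
  thus ?thesis by (intro bdd_belowI2)
qed

end

lemma (in convex_reg_risk) reg_risk_min_in_span:
  assumes min: "\<forall>h. R f \<le> R h"
  shows "f \<in> span (k ` I)"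
proof -
  obtain p where p: "p \<in> span (k ` I)" and eval: "\<And>i. i \<in> I \<Longrightarrow> inner (k i) p = inner (k i) f"
    using orthogonal_projection_onto_span[OF finite_I] by metis
  have eval': "inner p (k i) = inner f (k i)" if "i \<in> I" for i
    using eval[OF that] by (simp add: inner_commute)
  have "real_inner_class.orthogonal (f - p) p"
    by (rule orthogonal_to_span[OF p])
      (auto simp: real_inner_class.orthogonal_def inner_diff_left eval')
  hence pythagoras: "(norm f)\<^sup>2 = (norm p)\<^sup>2 + (norm (f - p))\<^sup>2"
    by (simp add: real_inner_class.orthogonal_def power2_norm_eq_inner inner_diff_left
        inner_diff_right inner_commute)
  have "(\<Sum>i\<in>I. c i * g i (inner p (k i))) = (\<Sum>i\<in>I. c i * g i (inner f (k i)))"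
    by (rule sum.cong) (simp_all add: eval')
  hence "R p + lam * (norm (f - p))\<^sup>2 = R f"
    unfolding reg_risk_def pythagoras by (simp add: algebra_simps)
  hence "lam * (norm (f - p))\<^sup>2 \<le> 0"
    using min by (metis add_le_same_cancel1)
  hence "f = p"
    using lam_pos by (simp add: mult_le_0_iff)
  thus ?thesis using p by simp
qed

lemma reg_risk_unique_min:
  fixes k :: "'i \<Rightarrow> 'h::{real_inner, complete_space}"
  assumes "convex_reg_risk I c g lam"
  shows "\<exists>!f. \<forall>h. reg_risk I c g k lam f \<le> reg_risk I c g k lam h"
proof -
  interpret convex_reg_risk I c g k lam by fact
  have mu: "lam / 4 > 0" using lam_pos by simp
  obtain f where "\<forall>h. R f \<le> R h"
    using strongly_midpoint_convex_has_min[OF mu continuous_on_reg_risk reg_risk_midpoint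
        reg_risk_bdd_below] .
  thus ?thesis
    using strongly_midpoint_convex_min_unique[OF mu reg_risk_midpoint] by blast
qed

definition reg_risk_grad :: "'i set \<Rightarrow> ('i \<Rightarrow> real) \<Rightarrow> ('i \<Rightarrow> real \<Rightarrow> real) \<Rightarrow> ('i \<Rightarrow> 'h::real_inner)
    \<Rightarrow> real \<Rightarrow> 'h \<Rightarrow> 'h" where
  "reg_risk_grad I c g k lam f = (\<Sum>i\<in>I. (c i * deriv (g i) (inner f (k i))) *\<^sub>R k i) + (2 * lam) *\<^sub>R f"

definition reg_risk_hess :: "'i set \<Rightarrow> ('i \<Rightarrow> real) \<Rightarrow> ('i \<Rightarrow> real \<Rightarrow> real) \<Rightarrow> ('i \<Rightarrow> 'h::real_inner)
    \<Rightarrow> real \<Rightarrow> 'h \<Rightarrow> 'h \<Rightarrow> 'h" where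
  "reg_risk_hess I c g k lam f h =
     frame_op I (\<lambda>i. c i * deriv (deriv (g i)) (inner f (k i))) k h + (2 * lam) *\<^sub>R h"

lemma has_real_derivative_along_line:
  fixes f u v :: "'h::real_inner"
  assumes "(\<phi> has_real_derivative D) (at (inner f v))"
  shows "((\<lambda>t. \<phi> (inner (f + t *\<^sub>R u) v)) has_real_derivative D * inner u v) (at 0)"
proof -
  have "((\<lambda>t. inner f v + t * inner u v) has_real_derivative inner u v) (at 0)"
    by (auto intro!: derivative_eq_intros)
  from DERIV_chain2[of \<phi>, OF _ this] assms show ?thesis
    by (simp add: inner_add_left)
qed

locale smooth_convex_reg_risk = convex_reg_risk +
  assumes g_deriv2: "\<And>i u. i \<in> I \<Longrightarrow> (deriv (g i) has_real_derivative deriv (deriv (g i)) u) (at u)"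
begin

abbreviation T where
  "T \<equiv> reg_risk_hess I c g k lam"

lemma reg_risk_directional_deriv:
  "((\<lambda>t. R (f + t *\<^sub>R u)) has_real_derivative inner (reg_risk_grad I c g k lam f) u) (at 0)"
proof -
  have "inner (f + t *\<^sub>R u) (f + t *\<^sub>R u) = inner f f + t * (2 * inner f u) + t\<^sup>2 * inner u u" for t
    by (simp add: inner_commute power2_eq_square algebra_simps)
  hence quad: "((\<lambda>t. lam * inner (f + t *\<^sub>R u) (f + t *\<^sub>R u)) has_real_derivative lam * (2 * inner f u)) (at 0)"
    by (simp only:) (auto intro!: derivative_eq_intros)
  have loss: "((\<lambda>t. \<Sum>i\<in>I. c i * g i (inner (f + t *\<^sub>R u) (k i))) has_real_derivative
      (\<Sum>i\<in>I. c i * (deriv (g i) (inner f (k i)) * inner u (k i)))) (at 0)"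
    by (intro DERIV_sum DERIV_cmult has_real_derivative_along_line g_deriv)
  have "(\<Sum>i\<in>I. c i * (deriv (g i) (inner f (k i)) * inner u (k i))) + lam * (2 * inner f u)
      = inner (reg_risk_grad I c g k lam f) u"
    by (simp add: reg_risk_grad_def inner_add_left inner_sum_left inner_commute[of u] mult_ac)
  thus ?thesis
    using DERIV_add[OF loss quad] unfolding reg_risk_def power2_norm_eq_inner by simp
qed

lemma reg_risk_grad_directional_deriv:
  "((\<lambda>s. inner (reg_risk_grad I c g k lam (f + s *\<^sub>R w)) u) has_real_derivative inner (T f w) u) (at 0)"
proof -
  have loss: "((\<lambda>s. \<Sum>i\<in>I. c i * (deriv (g i) (inner (f + s *\<^sub>R w) (k i)) * inner (k i) u))
      has_real_derivative
      (\<Sum>i\<in>I. c i * (deriv (deriv (g i)) (inner f (k i)) * inner w (k i) * inner (k i) u))) (at 0)"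
    by (intro DERIV_sum DERIV_cmult DERIV_cmult_right has_real_derivative_along_line g_deriv2)
  have quad: "((\<lambda>s. 2 * lam * (inner f u + s * inner w u)) has_real_derivative 2 * lam * inner w u) (at 0)"
    by (auto intro!: derivative_eq_intros)
  have "inner (reg_risk_grad I c g k lam (f + s *\<^sub>R w)) u
      = (\<Sum>i\<in>I. c i * (deriv (g i) (inner (f + s *\<^sub>R w) (k i)) * inner (k i) u))
        + 2 * lam * (inner f u + s * inner w u)" for s
    by (simp add: reg_risk_grad_def inner_add_left inner_sum_left mult_ac)
  moreover have "(\<Sum>i\<in>I. c i * (deriv (deriv (g i)) (inner f (k i)) * inner w (k i) * inner (k i) u))
      + 2 * lam * inner w u = inner (T f w) u"
    by (simp add: reg_risk_hess_def inner_frame_op inner_add_left inner_commute[of w] mult_ac)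
  ultimately show ?thesis
    using DERIV_add[OF loss quad] by simp
qed

lemma reg_risk_second_directional_deriv:
  "deriv (\<lambda>s. deriv (\<lambda>t. R (f + t *\<^sub>R u + s *\<^sub>R w)) 0) 0 = inner (T f w) u"
proof -
  have "deriv (\<lambda>t. R (f + t *\<^sub>R u + s *\<^sub>R w)) 0 = inner (reg_risk_grad I c g k lam (f + s *\<^sub>R w)) u" for s
    using DERIV_imp_deriv[OF reg_risk_directional_deriv[of "f + s *\<^sub>R w" u]] by (simp add: add_ac)
  thus ?thesis
    using DERIV_imp_deriv[OF reg_risk_grad_directional_deriv] by simp
qed

lemma linear_reg_risk_hess: "linear (T f)"
  unfolding reg_risk_hess_def[abs_def]
  by (intro linear_compose_add linear_frame_op linear_scaleR)

lemma inner_reg_risk_hess: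
  "inner (T f u) w
     = (\<Sum>i\<in>I. c i * deriv (deriv (g i)) (inner f (k i)) * inner (k i) u * inner (k i) w)
       + 2 * lam * inner u w"
  by (simp add: reg_risk_hess_def inner_add_left inner_frame_op)

lemma reg_risk_hess_sym: "inner (T f u) w = inner u (T f w)"
  unfolding inner_commute[of u] inner_reg_risk_hess by (simp add: inner_commute mult_ac)

lemma reg_risk_hess_coercive: "2 * lam * (norm h)\<^sup>2 \<le> inner (T f h) h"
proof -
  have "0 \<le> c i * deriv (deriv (g i)) (inner f (k i)) * inner (k i) h * inner (k i) h" if "i \<in> I" for i
    using c_nonneg[OF that]
      convex_on_UNIV_deriv2_nonneg[OF convex_g[OF that] g_deriv[OF that] g_deriv2[OF that]]
    by (simp add: mult.assoc)
  hence "0 \<le> inner (frame_op I (\<lambda>i. c i * deriv (deriv (g i)) (inner f (k i))) k h) h"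
    unfolding inner_frame_op by (rule sum_nonneg)
  thus ?thesis
    by (simp add: reg_risk_hess_def inner_add_left power2_norm_eq_inner)
qed

lemma inj_reg_risk_hess: "inj (T f)"
proof (subst linear_inj_on_iff_eq_0[OF linear_reg_risk_hess subspace_UNIV], intro ballI impI)
  fix h assume "T f h = 0"
  thus "h = 0"
    using reg_risk_hess_coercive[of h f] lam_pos by (simp add: mult_le_0_iff)
qed

lemma reg_risk_hess_onto_span: "T f ` span (k ` I) = span (k ` I)"
proof (rule linear_inj_on_span_imp_onto[OF linear_reg_risk_hess])
  show "T f ` span (k ` I) \<subseteq> span (k ` I)"
    unfolding reg_risk_hess_def by (auto intro: span_add span_scale frame_op_in_span)
qed (use finite_I inj_on_subset[OF inj_reg_risk_hess] in auto)

end

lemma self_scalar_prod_eq_0_iff: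
  fixes r :: "real vec"
  assumes "r \<in> carrier_vec n"
  shows "r \<bullet> r = 0 \<longleftrightarrow> r = 0\<^sub>v n"
proof
  assume "r \<bullet> r = 0"
  hence "\<forall>i\<in>{0..<n}. r $ i * r $ i = 0"
    using assms by (subst sum_nonneg_eq_0_iff[symmetric]) (auto simp: scalar_prod_def)
  thus "r = 0\<^sub>v n"
    using assms by (intro eq_vecI) auto
qed simp

lemma sym_mat_scalar_prod:
  fixes A :: "'a::comm_ring_1 mat"
  assumes A: "A \<in> carrier_mat n n" and sym: "transpose_mat A = A"
    and x: "x \<in> carrier_vec n" and y: "y \<in> carrier_vec n"
  shows "(A *\<^sub>v x) \<bullet> y = x \<bullet> (A *\<^sub>v y)"
  using transpose_vec_mult_scalar[OF A y x] sym by simp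

lemma sym_mat_mult_mult_eq_0:
  fixes A :: "real mat"
  assumes A: "A \<in> carrier_mat n n" and sym: "transpose_mat A = A"
    and x: "x \<in> carrier_vec n" and AAx: "A *\<^sub>v (A *\<^sub>v x) = 0\<^sub>v n"
  shows "A *\<^sub>v x = 0\<^sub>v n"
proof -
  have "(A *\<^sub>v x) \<bullet> (A *\<^sub>v x) = x \<bullet> (A *\<^sub>v (A *\<^sub>v x))"
    using sym_mat_scalar_prod[OF A sym x, of "A *\<^sub>v x"] A x by simp
  also have "\<dots> = 0"
    using AAx x by simp
  finally show ?thesis
    using self_scalar_prod_eq_0_iff[OF mult_mat_vec_carrier[OF A x]] by simp
qed

lemma mat_eq_iff_mult_vec_eq:
  fixes A B :: "'a::comm_ring_1 mat"
  assumes A: "A \<in> carrier_mat nr nc" and B: "B \<in> carrier_mat nr nc"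
    and eq: "\<And>v. v \<in> carrier_vec nc \<Longrightarrow> A *\<^sub>v v = B *\<^sub>v v"
  shows "A = B"
proof (rule eq_matI)
  fix i j assume "i < dim_row B" "j < dim_col B"
  thus "A $$ (i, j) = B $$ (i, j)"
    using arg_cong[OF eq[of "unit_vec nc j"], of "\<lambda>v. v $ i"] A B by simp
qed (use A B in auto)

lemma smult_zero_vec [simp]: "(a :: 'a::semiring_0) \<cdot>\<^sub>v 0\<^sub>v n = 0\<^sub>v n"
  by (rule eq_vecI) auto

lemma zero_smult_vec: "v \<in> carrier_vec n \<Longrightarrow> (0 :: 'a::semiring_0) \<cdot>\<^sub>v v = 0\<^sub>v n"
  by (rule eq_vecI) auto

lemma smult_mat_mult_vec:
  fixes M :: "'a::comm_semiring_0 mat"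
  assumes "M \<in> carrier_mat nr nc" and "x \<in> carrier_vec nc"
  shows "(a \<cdot>\<^sub>m M) *\<^sub>v x = a \<cdot>\<^sub>v (M *\<^sub>v x)"
  by (rule eq_vecI) (use assms in \<open>auto simp: scalar_prod_def sum_distrib_left mult_ac\<close>)

definition outer_mat :: "real vec \<Rightarrow> real mat" where
  "outer_mat r = mat (dim_vec r) (dim_vec r) (\<lambda>(i, j). r $ i * r $ j)"

lemma outer_mat_carrier [simp]: "r \<in> carrier_vec n \<Longrightarrow> outer_mat r \<in> carrier_mat n n"
  by (simp add: outer_mat_def)

lemma outer_mat_mult_vec:
  assumes "r \<in> carrier_vec n" and "x \<in> carrier_vec n"
  shows "outer_mat r *\<^sub>v x = (r \<bullet> x) \<cdot>\<^sub>v r"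
  by (rule eq_vecI) (use assms in \<open>auto simp: outer_mat_def scalar_prod_def sum_distrib_left mult_ac\<close>)

definition orth_projector :: "nat \<Rightarrow> real mat \<Rightarrow> bool" where
  "orth_projector n P \<longleftrightarrow> P \<in> carrier_mat n n \<and> transpose_mat P = P \<and> P * P = P"

lemma orth_projector_idem_vec:
  assumes "orth_projector n P" and "x \<in> carrier_vec n"
  shows "P *\<^sub>v (P *\<^sub>v x) = P *\<^sub>v x"
  using assms assoc_mult_mat_vec[of P n n P n x] by (simp add: orth_projector_def)

lemma orth_projector_add_rank_one:
  assumes P: "orth_projector n P"
    and r: "r \<in> carrier_vec n" and Pr: "P *\<^sub>v r = 0\<^sub>v n" and r0: "r \<noteq> 0\<^sub>v n"
  defines "P' \<equiv> P + (1 / (r \<bullet> r)) \<cdot>\<^sub>m outer_mat r"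
  shows "orth_projector n P'"
    and "\<And>x. x \<in> carrier_vec n \<Longrightarrow> P' *\<^sub>v x = P *\<^sub>v x + ((r \<bullet> x) / (r \<bullet> r)) \<cdot>\<^sub>v r"
proof -
  have Pc: "P \<in> carrier_mat n n" and Ps: "transpose_mat P = P"
    using P by (auto simp: orth_projector_def)
  have P'c: "P' \<in> carrier_mat n n"
    using Pc r by (simp add: P'_def)
  have rr: "r \<bullet> r \<noteq> 0"
    using self_scalar_prod_eq_0_iff[OF r] r0 by simp
  show act: "P' *\<^sub>v x = P *\<^sub>v x + ((r \<bullet> x) / (r \<bullet> r)) \<cdot>\<^sub>v r" if x: "x \<in> carrier_vec n" for x
  proof -
    have "P' *\<^sub>v x = P *\<^sub>v x + ((1 / (r \<bullet> r)) \<cdot>\<^sub>m outer_mat r) *\<^sub>v x"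
      unfolding P'_def using Pc r x by (simp add: add_mult_distrib_mat_vec)
    also have "((1 / (r \<bullet> r)) \<cdot>\<^sub>m outer_mat r) *\<^sub>v x = ((r \<bullet> x) / (r \<bullet> r)) \<cdot>\<^sub>v r"
      using r x by (simp add: smult_mat_mult_vec[of _ n n] outer_mat_mult_vec smult_smult_assoc)
    finally show ?thesis .
  qed
  have "transpose_mat P' = P'"
  proof (rule eq_matI)
    fix i j assume "i < dim_row P'" "j < dim_col P'"
    hence ij: "i < n" "j < n" using P'c by auto
    have "P $$ (j, i) = P $$ (i, j)"
      using ij Pc arg_cong[OF Ps, of "\<lambda>M. M $$ (i, j)"] by simp
    thus "transpose_mat P' $$ (i, j) = P' $$ (i, j)"
      using ij Pc r by (simp add: P'_def outer_mat_def)
  qed (use P'c in auto)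
  moreover have "P' * P' = P'"
  proof (rule mat_eq_iff_mult_vec_eq)
    fix x :: "real vec" assume x: "x \<in> carrier_vec n"
    define t where "t = (r \<bullet> x) / (r \<bullet> r)"
    have y: "P *\<^sub>v x + t \<cdot>\<^sub>v r \<in> carrier_vec n"
      using Pc x r by simp
    have "P *\<^sub>v (P *\<^sub>v x + t \<cdot>\<^sub>v r) = P *\<^sub>v x"
      using Pc x r Pr orth_projector_idem_vec[OF P x] by (simp add: mult_add_distrib_mat_vec mult_mat_vec)
    moreover have "r \<bullet> (P *\<^sub>v x + t \<cdot>\<^sub>v r) = t * (r \<bullet> r)"
      using Pc x r Pr sym_mat_scalar_prod[OF Pc Ps r x] by (simp add: scalar_prod_add_distrib)
    ultimately have "P' *\<^sub>v (P' *\<^sub>v x) = P' *\<^sub>v x"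
      unfolding act[OF x] act[OF y] t_def[symmetric] using rr by simp
    thus "(P' * P') *\<^sub>v x = P' *\<^sub>v x"
      using assoc_mult_mat_vec[OF P'c P'c x] by simp
  qed (use P'c in auto)
  ultimately show "orth_projector n P'"
    using P'c by (simp add: orth_projector_def)
qed

lemma column_space_projector:
  fixes A :: "real mat"
  assumes A: "A \<in> carrier_mat n m" and "k \<le> m"
  shows "\<exists>P. orth_projector n P \<and> (\<forall>j<k. P *\<^sub>v col A j = col A j)
           \<and> (\<forall>v\<in>carrier_vec n. (\<forall>j<k. col A j \<bullet> v = 0) \<longrightarrow> P *\<^sub>v v = 0\<^sub>v n)"
  using \<open>k \<le> m\<close>
proof (induction k)
  case 0
  show ?case
    by (intro exI[of _ "0\<^sub>m n n"]) (auto simp: orth_projector_def)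
next
  case (Suc k)
  then obtain P where P: "orth_projector n P" and fix_cols: "\<forall>j<k. P *\<^sub>v col A j = col A j"
    and kill: "\<forall>v\<in>carrier_vec n. (\<forall>j<k. col A j \<bullet> v = 0) \<longrightarrow> P *\<^sub>v v = 0\<^sub>v n"
    by auto
  have Pc: "P \<in> carrier_mat n n" and Ps: "transpose_mat P = P"
    using P by (auto simp: orth_projector_def)
  have col: "col A j \<in> carrier_vec n" for j
    using A by (intro carrier_vecI) simp
  define w where "w = col A k"
  define r where "r = w - P *\<^sub>v w"
  have w: "w \<in> carrier_vec n" and r: "r \<in> carrier_vec n"
    using col Pc by (simp_all add: w_def r_def)
  have Pr: "P *\<^sub>v r = 0\<^sub>v n"
    unfolding r_def using Pc w orth_projector_idem_vec[OF P w] by (simp add: mult_minus_distrib_mat_vec)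
  have r_orth: "r \<bullet> (P *\<^sub>v x) = 0" if "x \<in> carrier_vec n" for x
    using sym_mat_scalar_prod[OF Pc Ps r that] Pr that by simp
  have r_w: "r \<bullet> v = w \<bullet> v - w \<bullet> (P *\<^sub>v v)" if "v \<in> carrier_vec n" for v
    using sym_mat_scalar_prod[OF Pc Ps w that] that w Pc by (simp add: r_def minus_scalar_prod_distrib)
  show ?case
  proof (cases "r = 0\<^sub>v n")
    case True
    have "P *\<^sub>v w = w"
    proof (rule eq_vecI)
      fix i assume i: "i < dim_vec w"
      hence "r $ i = 0" using True w by simp
      thus "(P *\<^sub>v w) $ i = w $ i" using i w Pc by (simp add: r_def)
    qed (use w Pc in simp)
    thus ?thesis
      using P fix_cols kill by (intro exI[of _ P]) (auto simp: w_def less_Suc_eq)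
  next
    case False
    define P' where "P' = P + (1 / (r \<bullet> r)) \<cdot>\<^sub>m outer_mat r"
    note P' = orth_projector_add_rank_one[OF P r Pr False, folded P'_def]
    have "r \<bullet> r \<noteq> 0"
      using self_scalar_prod_eq_0_iff[OF r] False by simp
    have "P' *\<^sub>v col A j = col A j" if "j < Suc k" for j
    proof (cases "j = k")
      case True
      have "r \<bullet> (w - P *\<^sub>v w) = r \<bullet> w - r \<bullet> (P *\<^sub>v w)"
        by (rule scalar_prod_minus_distrib[OF r w]) (use Pc w in simp)
      hence "r \<bullet> w = r \<bullet> r"
        using r_orth[OF w] by (simp add: r_def[symmetric])
      hence "P' *\<^sub>v w = P *\<^sub>v w + r"
        using P'(2)[OF w] \<open>r \<bullet> r \<noteq> 0\<close> by simp
      also have "\<dots> = w"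
        by (rule eq_vecI) (use w Pc in \<open>auto simp: r_def\<close>)
      finally show ?thesis
        using True by (simp add: w_def)
    next
      case False
      hence "P *\<^sub>v col A j = col A j"
        using fix_cols that by simp
      hence "r \<bullet> col A j = 0"
        using r_orth[OF col] by metis
      thus ?thesis
        using P'(2)[OF col] \<open>P *\<^sub>v col A j = col A j\<close> col by (simp add: zero_smult_vec[OF r])
    qed
    moreover have "P' *\<^sub>v v = 0\<^sub>v n" if "v \<in> carrier_vec n" "\<forall>j<Suc k. col A j \<bullet> v = 0" for v
    proof -
      have "P *\<^sub>v v = 0\<^sub>v n"
        using kill that by simp
      moreover have "r \<bullet> v = 0"
        using r_w[OF that(1)] that \<open>P *\<^sub>v v = 0\<^sub>v n\<close> w by (simp add: w_def)
      ultimately show ?thesis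
        using P'(2)[OF that(1)] r by (simp add: zero_smult_vec[OF r])
    qed
    ultimately show ?thesis
      using P'(1) by blast
  qed
qed

definition is_mp_pinv :: "nat \<Rightarrow> 'a::comm_ring_1 mat \<Rightarrow> 'a mat \<Rightarrow> bool" where
  "is_mp_pinv n A B \<longleftrightarrow> B \<in> carrier_mat n n \<and> A * B * A = A \<and> B * A * B = B
      \<and> transpose_mat (A * B) = A * B \<and> transpose_mat (B * A) = B * A"

lemma mp_pinv_eq_The: "mp_pinv n A = (THE B. is_mp_pinv n A B)"
  unfolding mp_pinv_def is_mp_pinv_def ..

lemma is_mp_pinv_unique:
  fixes A :: "'a::comm_ring_1 mat"
  assumes A: "A \<in> carrier_mat n n" and B1: "is_mp_pinv n A B1" and B2: "is_mp_pinv n A B2"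
  shows "B1 = B2"
proof -
  have c: "B1 \<in> carrier_mat n n" "B2 \<in> carrier_mat n n"
    using B1 B2 by (auto simp: is_mp_pinv_def)
  note assoc = assoc_mult_mat[of _ n n _ n _ n]
  have ABA: "A * (B1 * A) = A" "A * (B2 * A) = A" and BAB: "B1 * (A * B1) = B1" "B2 * (A * B2) = B2"
    and AB: "transpose_mat (A * B1) = A * B1" "transpose_mat (A * B2) = A * B2"
    and BA: "transpose_mat (B1 * A) = B1 * A" "transpose_mat (B2 * A) = B2 * A"
    using B1 B2 A c by (auto simp: is_mp_pinv_def assoc)
  have BA_BA: "(B1 * A) * (B2 * A) = B2 * A"
  proof -
    have "(B1 * A) * (B2 * A) = transpose_mat ((B2 * A) * (B1 * A))"
      using transpose_mult[of "B2 * A" n n "B1 * A" n] BA A c by simp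
    also have "(B2 * A) * (B1 * A) = B2 * A"
      using ABA A c by (simp add: assoc)
    finally show ?thesis using BA by simp
  qed
  have AB_AB: "(A * B2) * (A * B1) = A * B2"
  proof -
    have "(A * B2) * (A * B1) = transpose_mat ((A * B1) * (A * B2))"
      using transpose_mult[of "A * B1" n n "A * B2" n] AB A c by simp
    also have "(A * B1) * (A * B2) = (A * (B1 * A)) * B2"
      using A c by (simp add: assoc)
    also have "\<dots> = A * B2"
      using ABA by simp
    finally show ?thesis using AB by simp
  qed
  have "B1 = B1 * ((A * (B2 * A)) * B1)"
    using BAB ABA by simp
  also have "\<dots> = ((B1 * A) * (B2 * A)) * B1"
    using A c by (simp add: assoc)
  also have "\<dots> = ((B2 * (A * B2)) * A) * B1"
    using BA_BA BAB by simp
  also have "\<dots> = B2 * ((A * B2) * (A * B1))"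
    using A c by (simp add: assoc)
  also have "\<dots> = B2"
    using AB_AB BAB by simp
  finally show ?thesis .
qed

lemma is_mp_pinv_via_commuting_inverse:
  fixes A :: "'a::comm_ring_1 mat"
  assumes c: "A \<in> carrier_mat n n" "P \<in> carrier_mat n n" "C \<in> carrier_mat n n" "C' \<in> carrier_mat n n"
    and P: "transpose_mat P = P" "P * P = P"
    and C': "C' * C = 1\<^sub>m n" "C * C' = 1\<^sub>m n"
    and CP: "C * P = A" "P * C = A"
  shows "is_mp_pinv n A (C' * P)"
proof -
  note assoc = assoc_mult_mat[of _ n n _ n _ n]
  have "P * C' = (C' * C) * (P * C')"
    using c C' by simp
  also have "\<dots> = C' * ((C * P) * C')"
    using c by (simp add: assoc)
  also have "\<dots> = C' * ((P * C) * C')"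
    using CP by simp
  also have "\<dots> = (C' * P) * (C * C')"
    using c by (simp add: assoc)
  finally have comm: "P * C' = C' * P"
    using c C' by simp
  have AB: "A * (C' * P) = P"
  proof -
    have "A * (C' * P) = P * ((C * C') * P)"
      using c by (simp add: assoc flip: CP(2))
    thus ?thesis using c C' P by simp
  qed
  have BA: "(C' * P) * A = P"
  proof -
    have "(C' * P) * A = (C' * P) * (C * P)"
      using CP by simp
    also have "\<dots> = C' * ((P * C) * P)"
      using c by (simp add: assoc)
    also have "\<dots> = C' * ((C * P) * P)"
      using CP by simp
    also have "\<dots> = (C' * C) * (P * P)"
      using c by (simp add: assoc)
    finally show ?thesis using c C' P by simp
  qed
  have "A * (C' * P) * A = A"
  proof -
    have "A * (C' * P) * A = (P * P) * C"
      using c AB by (simp add: assoc flip: CP(2))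
    thus ?thesis using P CP by simp
  qed
  moreover have "(C' * P) * A * (C' * P) = C' * P"
  proof -
    have "(C' * P) * A * (C' * P) = (P * C') * P"
      using c BA by (simp add: assoc)
    also have "\<dots> = C' * (P * P)"
      using c comm by (simp add: assoc)
    finally show ?thesis using P by simp
  qed
  ultimately show ?thesis
    using AB BA P c by (simp add: is_mp_pinv_def)
qed

lemma det_shifted_by_projector_neq_0:
  fixes A :: "real mat"
  assumes A: "A \<in> carrier_mat n n" and As: "transpose_mat A = A"
    and P: "orth_projector n P" and AP: "A * P = A"
    and ker: "\<And>v. v \<in> carrier_vec n \<Longrightarrow> A *\<^sub>v v = 0\<^sub>v n \<Longrightarrow> P *\<^sub>v v = 0\<^sub>v n"
  shows "det (A + 1\<^sub>m n - P) \<noteq> 0"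
proof
  have Pc: "P \<in> carrier_mat n n" using P by (simp add: orth_projector_def)
  have C: "A + 1\<^sub>m n - P \<in> carrier_mat n n" using A Pc by (intro minus_carrier_mat add_carrier_mat) auto
  assume "det (A + 1\<^sub>m n - P) = 0"
  then obtain v where v: "v \<in> carrier_vec n" "v \<noteq> 0\<^sub>v n" and Cv: "(A + 1\<^sub>m n - P) *\<^sub>v v = 0\<^sub>v n"
    using det_0_iff_vec_prod_zero[OF C] by blast
  define u where "u = A *\<^sub>v v"
  have u: "u \<in> carrier_vec n" using A v by (simp add: u_def)
  have u_eq: "u = P *\<^sub>v v - v"
  proof (rule eq_vecI)
    fix i assume "i < dim_vec (P *\<^sub>v v - v)"
    hence i: "i < n" using v by simp
    have "(A *\<^sub>v v + v - P *\<^sub>v v) $ i = 0"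
      using Cv i A Pc v by (simp add: add_mult_distrib_mat_vec minus_mult_distrib_mat_vec[of _ n n])
    thus "u $ i = (P *\<^sub>v v - v) $ i" using i A Pc v by (simp add: u_def)
  qed (use u v Pc in auto)
  \<comment> \<open>\<open>u\<close> lies both in the range of \<open>A\<close> and, by \<open>A P = A\<close>, orthogonally to it\<close>
  have "u \<bullet> u = u \<bullet> (P *\<^sub>v v) - u \<bullet> v"
    using scalar_prod_minus_distrib[OF u, of "P *\<^sub>v v" v] u_eq Pc v by simp
  also have "u \<bullet> (P *\<^sub>v v) = v \<bullet> (A *\<^sub>v v)"
    using sym_mat_scalar_prod[OF A As v(1), of "P *\<^sub>v v"] assoc_mult_mat_vec[OF A Pc v(1)] AP Pc v
    by (simp add: u_def)
  also have "u \<bullet> v = v \<bullet> (A *\<^sub>v v)"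
    using comm_scalar_prod[OF u v(1)] by (simp add: u_def)
  finally have "u = 0\<^sub>v n"
    using self_scalar_prod_eq_0_iff[OF u] by simp
  hence "P *\<^sub>v v = 0\<^sub>v n"
    using ker[OF v(1)] by (simp add: u_def)
  hence "v = 0\<^sub>v n"
    using u_eq \<open>u = 0\<^sub>v n\<close> v by (metis uminus_zero_vec_eq zero_minus_vec)
  with v(2) show False ..
qed

lemma sym_mat_has_mp_pinv:
  fixes A :: "real mat"
  assumes A: "A \<in> carrier_mat n n" and As: "transpose_mat A = A"
  shows "\<exists>B. is_mp_pinv n A B"
proof -
  obtain P where P: "orth_projector n P" and fix_cols: "\<forall>j<n. P *\<^sub>v col A j = col A j"
    and kill: "\<forall>v\<in>carrier_vec n. (\<forall>j<n. col A j \<bullet> v = 0) \<longrightarrow> P *\<^sub>v v = 0\<^sub>v n"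
    using column_space_projector[OF A order_refl] by blast
  have Pc: "P \<in> carrier_mat n n" and Ps: "transpose_mat P = P" and PP: "P * P = P"
    using P by (auto simp: orth_projector_def)
  have PA: "P * A = A"
    by (rule eq_matI) (use A Pc fix_cols in \<open>auto simp: mult_mat_vec_def simp flip: index_mult_mat_vec\<close>)
  have AP: "A * P = A"
    using arg_cong[OF PA, of transpose_mat] transpose_mult[OF Pc A] As Ps by simp
  \<comment> \<open>the columns of the symmetric \<open>A\<close> are its rows, so \<open>P\<close> kills the kernel of \<open>A\<close>\<close>
  have ker: "P *\<^sub>v v = 0\<^sub>v n" if v: "v \<in> carrier_vec n" and Av: "A *\<^sub>v v = 0\<^sub>v n" for v
  proof -
    have "col A j \<bullet> v = (A *\<^sub>v v) $ j" if "j < n" for j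
      using that A arg_cong[OF As, of "\<lambda>M. col M j"] by (metis carrier_matD(1) col_transpose index_mult_mat_vec)
    thus ?thesis using kill v Av by simp
  qed
  define C where "C = A + 1\<^sub>m n - P"
  have C: "C \<in> carrier_mat n n"
    unfolding C_def using A Pc by (intro minus_carrier_mat add_carrier_mat) auto
  obtain C' where C': "C' \<in> carrier_mat n n" "C' * C = 1\<^sub>m n" "C * C' = 1\<^sub>m n"
    using det_non_zero_imp_unit[OF C det_shifted_by_projector_neq_0[OF A As P AP ker, folded C_def]]
    unfolding Units_def ring_mat_def by auto
  have cancel: "A + P - P = A"
    by (rule eq_matI) (use A Pc in auto)
  have "C * P = (A + 1\<^sub>m n) * P - P * P"
    unfolding C_def using A Pc by (simp add: minus_mult_distrib_mat[of _ n n])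
  also have "\<dots> = A"
    using A Pc PP AP cancel by (simp add: add_mult_distrib_mat[of _ n n])
  moreover have "P * C = P * (A + 1\<^sub>m n) - P * P"
    unfolding C_def using A Pc by (intro mult_minus_distrib_mat[of _ n n]) auto
  moreover have "\<dots> = A"
    using A Pc PP PA cancel by (simp add: mult_add_distrib_mat[of _ n n])
  ultimately have "C * P = A" "P * C = A"
    by simp_all
  thus ?thesis
    using is_mp_pinv_via_commuting_inverse[OF A Pc C C'(1) Ps PP C'(2,3)] by blast
qed

lemma mp_pinv_is_mp_pinv:
  fixes A :: "real mat"
  assumes A: "A \<in> carrier_mat n n" and As: "transpose_mat A = A"
  shows "is_mp_pinv n A (mp_pinv n A)"
  unfolding mp_pinv_eq_The
  using sym_mat_has_mp_pinv[OF A As] is_mp_pinv_unique[OF A] by (metis theI)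

lemma mp_pinv_mult_range:
  fixes A :: "real mat"
  assumes A: "A \<in> carrier_mat n n" and As: "transpose_mat A = A" and c: "c \<in> carrier_vec n"
  shows "A *\<^sub>v (mp_pinv n A *\<^sub>v (A *\<^sub>v c)) = A *\<^sub>v c"
proof -
  have B: "mp_pinv n A \<in> carrier_mat n n" and ABA: "A * mp_pinv n A * A = A"
    using mp_pinv_is_mp_pinv[OF A As] by (auto simp: is_mp_pinv_def)
  show ?thesis
    using arg_cong[OF ABA, of "\<lambda>M. M *\<^sub>v c"] A B c by (simp add: assoc_mult_mat_vec[of _ n n _ n])
qed

definition vec_lincomb :: "(nat \<Rightarrow> 'h::real_vector) \<Rightarrow> real vec \<Rightarrow> 'h" where
  "vec_lincomb k b = (\<Sum>j<dim_vec b. b $ j *\<^sub>R k j)"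

lemma vec_lincomb_add:
  "b \<in> carrier_vec N \<Longrightarrow> b' \<in> carrier_vec N \<Longrightarrow> vec_lincomb k (b + b') = vec_lincomb k b + vec_lincomb k b'"
  by (simp add: vec_lincomb_def scaleR_add_left sum.distrib)

lemma vec_lincomb_diff:
  "b \<in> carrier_vec N \<Longrightarrow> b' \<in> carrier_vec N \<Longrightarrow> vec_lincomb k (b - b') = vec_lincomb k b - vec_lincomb k b'"
  by (simp add: vec_lincomb_def scaleR_diff_left sum_subtractf)

lemma vec_lincomb_smult: "vec_lincomb k (t \<cdot>\<^sub>v b) = t *\<^sub>R vec_lincomb k b"
  by (simp add: vec_lincomb_def scaleR_sum_right)

lemma vec_lincomb_unit_vec: "j < N \<Longrightarrow> vec_lincomb k (unit_vec N j) = k j"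
  by (simp add: vec_lincomb_def unit_vec_def if_distrib[of "\<lambda>t. t *\<^sub>R _"] cong: if_cong)

lemma vec_lincomb_in_span: "vec_lincomb k b \<in> span (k ` {..<dim_vec b})"
  unfolding vec_lincomb_def by (intro span_sum span_scale span_base) auto

lemma span_eq_vec_lincomb:
  assumes "h \<in> span (k ` {..<N})"
  obtains b where "b \<in> carrier_vec N" and "vec_lincomb k b = h"
proof -
  define V where "V = vec_lincomb k ` carrier_vec N"
  have "subspace V"
    unfolding subspace_def
  proof (intro conjI ballI allI)
    show "0 \<in> V"
      unfolding V_def by (rule image_eqI[of _ _ "0\<^sub>v N"]) (auto simp: vec_lincomb_def)
  next
    fix x y assume "x \<in> V" "y \<in> V"
    then obtain b b' where "b \<in> carrier_vec N" "b' \<in> carrier_vec N" "x = vec_lincomb k b" "y = vec_lincomb k b'"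
      unfolding V_def by blast
    thus "x + y \<in> V"
      unfolding V_def by (intro image_eqI[of _ _ "b + b'"]) (simp_all add: vec_lincomb_add)
  next
    fix t x assume "x \<in> V"
    then obtain b where "b \<in> carrier_vec N" "x = vec_lincomb k b"
      unfolding V_def by blast
    thus "t *\<^sub>R x \<in> V"
      unfolding V_def by (intro image_eqI[of _ _ "t \<cdot>\<^sub>v b"]) (simp_all add: vec_lincomb_smult)
  qed
  moreover have "k ` {..<N} \<subseteq> V"
  proof
    fix x assume "x \<in> k ` {..<N}"
    then obtain j where "j < N" "x = k j" by blast
    thus "x \<in> V"
      unfolding V_def by (intro image_eqI[of _ _ "unit_vec N j"]) (simp_all add: vec_lincomb_unit_vec)
  qed
  ultimately have "h \<in> V"
    using span_minimal assms by blast
  thus ?thesis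
    using that unfolding V_def by blast
qed

definition col_feature :: "('x \<Rightarrow> 'h) \<Rightarrow> (nat \<Rightarrow> 'x) \<Rightarrow> nat \<Rightarrow> 'h" where
  "col_feature Kx X j = Kx (X (Suc j))"

lemma col_feature_image: "col_feature Kx X ` {..<Suc n} = Kx ` X ` {1..Suc n}"
proof -
  have "col_feature Kx X ` {..<Suc n} = Kx ` X ` Suc ` {..<Suc n}"
    unfolding col_feature_def by (simp only: image_image)
  thus ?thesis by (simp only: image_Suc_lessThan)
qed

lemma vec_lincomb_col_feature:
  assumes "b \<in> carrier_vec (Suc n)"
  shows "vec_lincomb (col_feature Kx X) b = (\<Sum>i=1..n+1. b $ (i - 1) *\<^sub>R Kx (X i))"
proof -
  have "(\<Sum>i=1..n+1. b $ (i - 1) *\<^sub>R Kx (X i)) = (\<Sum>i<Suc n. b $ i *\<^sub>R Kx (X (Suc i)))"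
    by (simp only: Suc_eq_plus1[symmetric] One_nat_def sum.atLeast1_atMost_eq) (simp del: sum.lessThan_Suc)
  thus ?thesis
    using assms by (simp add: vec_lincomb_def col_feature_def del: sum.lessThan_Suc)
qed

lemma gram_dim [simp]: "dim_row (gram Kx X n) = Suc n" "dim_col (gram Kx X n) = Suc n"
  by (simp_all add: gram_def)

lemma gram_carrier [simp]: "gram Kx X n \<in> carrier_mat (Suc n) (Suc n)"
  by (simp add: gram_def)

lemma gram_mult_vec_carrier [simp]: "gram Kx X n *\<^sub>v b \<in> carrier_vec (Suc n)"
  by (rule carrier_vecI) simp

lemma gram_col_carrier [simp]: "col (gram Kx X n) j \<in> carrier_vec (Suc n)"
  by (rule carrier_vecI) simp

lemma gram_index:
  "i < Suc n \<Longrightarrow> j < Suc n \<Longrightarrow> gram Kx X n $$ (i, j) = inner (col_feature Kx X i) (col_feature Kx X j)"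
  by (simp add: gram_def kern_def col_feature_def)

lemma gram_sym: "transpose_mat (gram Kx X n) = gram Kx X n"
  by (rule eq_matI) (auto simp: gram_def kern_def inner_commute)

lemma gram_mult_vec_index:
  assumes b: "b \<in> carrier_vec (Suc n)" and i: "i < Suc n"
  shows "(gram Kx X n *\<^sub>v b) $ i = inner (col_feature Kx X i) (vec_lincomb (col_feature Kx X) b)"
proof -
  have "(gram Kx X n *\<^sub>v b) $ i = (\<Sum>j<Suc n. gram Kx X n $$ (i, j) * b $ j)"
    using b i by (simp add: scalar_prod_def atLeast0LessThan del: sum.lessThan_Suc)
  also have "\<dots> = inner (col_feature Kx X i) (vec_lincomb (col_feature Kx X) b)"
    using b i by (simp add: vec_lincomb_def inner_sum_right gram_index mult.commute del: sum.lessThan_Suc)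
  finally show ?thesis .
qed

lemma scalar_prod_col_gram:
  assumes b: "b \<in> carrier_vec (Suc n)" and i: "i < Suc n"
  shows "b \<bullet> col (gram Kx X n) i = inner (vec_lincomb (col_feature Kx X) b) (col_feature Kx X i)"
proof -
  have "b \<bullet> col (gram Kx X n) i = (\<Sum>j<Suc n. b $ j * gram Kx X n $$ (j, i))"
    using b i by (simp add: scalar_prod_def atLeast0LessThan del: sum.lessThan_Suc)
  also have "\<dots> = inner (vec_lincomb (col_feature Kx X) b) (col_feature Kx X i)"
    using b i by (simp add: vec_lincomb_def inner_sum_left gram_index del: sum.lessThan_Suc)
  finally show ?thesis .
qed

lemma vec_lincomb_gram_mult:
  assumes "b \<in> carrier_vec (Suc n)"
  shows "vec_lincomb (col_feature Kx X) (gram Kx X n *\<^sub>v b)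
           = frame_op {..<Suc n} (\<lambda>_. 1) (col_feature Kx X) (vec_lincomb (col_feature Kx X) b)"
  unfolding frame_op_def vec_lincomb_def[of _ "gram Kx X n *\<^sub>v b"]
  by (rule sum.cong) (simp_all add: gram_mult_vec_index[OF assms] del: index_mult_mat_vec)

lemma gram_mult_eq_0_if_vec_lincomb_eq_0:
  assumes "b \<in> carrier_vec (Suc n)" and "vec_lincomb (col_feature Kx X) b = 0"
  shows "gram Kx X n *\<^sub>v b = 0\<^sub>v (Suc n)"
  by (rule eq_vecI) (use assms in \<open>simp_all add: gram_mult_vec_index del: index_mult_mat_vec\<close>)

lemma scalar_prod_gram_mult_self:
  assumes "b \<in> carrier_vec (Suc n)"
  shows "b \<bullet> (gram Kx X n *\<^sub>v b) = (norm (vec_lincomb (col_feature Kx X) b))\<^sup>2"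
proof -
  have "b \<bullet> (gram Kx X n *\<^sub>v b) = (\<Sum>i<Suc n. b $ i * (gram Kx X n *\<^sub>v b) $ i)"
    using assms by (simp add: scalar_prod_def atLeast0LessThan del: sum.lessThan_Suc index_mult_mat_vec)
  also have "\<dots> = inner (vec_lincomb (col_feature Kx X) b) (vec_lincomb (col_feature Kx X) b)"
    using assms by (simp add: gram_mult_vec_index vec_lincomb_def[of _ b] inner_sum_left
        del: sum.lessThan_Suc index_mult_mat_vec)
  finally show ?thesis by (simp add: power2_norm_eq_inner)
qed

definition aug_weight :: "nat \<Rightarrow> (nat \<Rightarrow> real) \<Rightarrow> nat \<Rightarrow> real" where
  "aug_weight n v i = v (Suc i) / real (Suc n)"

definition aug_loss :: "(real \<Rightarrow> real \<Rightarrow> real) \<Rightarrow> nat \<Rightarrow> (nat \<Rightarrow> real) \<Rightarrow> real \<Rightarrow> real \<Rightarrow> nat \<Rightarrow> real \<Rightarrow> real"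
  where "aug_loss l n Y y z i = l (if i < n then Y (Suc i) else if i = n then z else y)"

definition aug_feature :: "('x \<Rightarrow> 'h) \<Rightarrow> (nat \<Rightarrow> 'x) \<Rightarrow> nat \<Rightarrow> nat \<Rightarrow> 'h" where
  "aug_feature Kx X n i = col_feature Kx X (min i n)"

lemma aug_feature_image: "aug_feature Kx X n ` {..<Suc (Suc n)} = col_feature Kx X ` {..<Suc n}"
proof (intro equalityI image_subsetI)
  fix i assume "i \<in> {..<Suc (Suc n)}"
  thus "aug_feature Kx X n i \<in> col_feature Kx X ` {..<Suc n}"
    unfolding aug_feature_def by (intro imageI) auto
next
  fix j assume "j \<in> {..<Suc n}"
  hence "col_feature Kx X j = aug_feature Kx X n j" "j \<in> {..<Suc (Suc n)}"
    by (auto simp: aug_feature_def min_def)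
  thus "col_feature Kx X j \<in> aug_feature Kx X n ` {..<Suc (Suc n)}"
    by (metis imageI)
qed

lemma Rbold_eq_reg_risk:
  "Rbold l lam n X Y Kx y z v
     = reg_risk {..<Suc (Suc n)} (aug_weight n v) (aug_loss l n Y y z) (aug_feature Kx X n) lam"
proof
  fix f
  have "(\<Sum>i<n. aug_weight n v i * aug_loss l n Y y z i (inner f (aug_feature Kx X n i)))
      = (1 / real (n+1)) * (\<Sum>i=1..n. v i * l (Y i) (evalH f Kx (X i)))"
    by (simp add: sum_distrib_left sum.atLeast1_atMost_eq aug_weight_def aug_loss_def aug_feature_def
        col_feature_def evalH_def)
  thus "Rbold l lam n X Y Kx y z v f
      = reg_risk {..<Suc (Suc n)} (aug_weight n v) (aug_loss l n Y y z) (aug_feature Kx X n) lam f"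
    unfolding reg_risk_def Rbold_def
    by (simp add: aug_weight_def aug_loss_def aug_feature_def col_feature_def evalH_def)
qed

lemma hess_op_eq_reg_risk_hess:
  "hess_op l lam n X Y Kx y z v
     = reg_risk_hess {..<Suc (Suc n)} (aug_weight n v) (aug_loss l n Y y z) (aug_feature Kx X n) lam"
proof (intro ext)
  fix f h
  have "(\<Sum>i<n. (aug_weight n v i * deriv (deriv (aug_loss l n Y y z i)) (inner f (aug_feature Kx X n i))
         * inner (aug_feature Kx X n i) h) *\<^sub>R aug_feature Kx X n i)
      = (1 / real (n+1)) *\<^sub>R (\<Sum>i=1..n. (v i * deriv (deriv (l (Y i))) (evalH f Kx (X i))
         * inner (Kx (X i)) h) *\<^sub>R Kx (X i))"
    by (simp add: scaleR_sum_right sum.atLeast1_atMost_eq aug_weight_def aug_loss_def aug_feature_def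
        col_feature_def evalH_def)
  thus "hess_op l lam n X Y Kx y z v f h
      = reg_risk_hess {..<Suc (Suc n)} (aug_weight n v) (aug_loss l n Y y z) (aug_feature Kx X n) lam f h"
    unfolding reg_risk_hess_def frame_op_def hess_op_def
    by (simp add: aug_weight_def aug_loss_def aug_feature_def col_feature_def evalH_def)
qed

lemma Rhat_eq_Rbold:
  assumes b: "b \<in> carrier_vec (Suc n)"
  shows "Rhat l lam n X Y Kx y z v b = Rbold l lam n X Y Kx y z v (vec_lincomb (col_feature Kx X) b)"
proof -
  have eval: "b \<bullet> col (gram Kx X n) (i - 1) = evalH (vec_lincomb (col_feature Kx X) b) Kx (X i)"
    if "1 \<le> i" "i \<le> Suc n" for i
  proof -
    have "i - 1 < Suc n" "Suc (i - 1) = i" using that by auto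
    thus ?thesis
      using scalar_prod_col_gram[OF b, of "i - 1" Kx X] by (simp add: evalH_def col_feature_def)
  qed
  have "(\<Sum>i=1..n. v i * l (Y i) (b \<bullet> col (gram Kx X n) (i - 1)))
      = (\<Sum>i=1..n. v i * l (Y i) (evalH (vec_lincomb (col_feature Kx X) b) Kx (X i)))"
    by (rule sum.cong) (simp_all add: eval[simplified])
  with eval[of "Suc n"] show ?thesis
    unfolding Rhat_def Rbold_def Let_def by (simp add: scalar_prod_gram_mult_self[OF b])
qed

lemma mat_range_gram_inj:
  assumes a: "a \<in> mat_range (Suc n) (gram Kx X n)" and a': "a' \<in> mat_range (Suc n) (gram Kx X n)"
    and eq: "vec_lincomb (col_feature Kx X) a = vec_lincomb (col_feature Kx X) a'"
  shows "a = a'"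
proof -
  let ?K = "gram Kx X n"
  obtain e e' where e: "e \<in> carrier_vec (Suc n)" "a = ?K *\<^sub>v e"
    and e': "e' \<in> carrier_vec (Suc n)" "a' = ?K *\<^sub>v e'"
    using a a' unfolding mat_range_def by blast
  have ee': "e - e' \<in> carrier_vec (Suc n)"
    using e(1) e'(1) by (rule minus_carrier_vec)
  have diff: "a - a' = ?K *\<^sub>v (e - e')"
    using mult_minus_distrib_mat_vec[OF gram_carrier[of Kx X n] e(1) e'(1)] e(2) e'(2) by simp
  have "vec_lincomb (col_feature Kx X) (a - a') = vec_lincomb (col_feature Kx X) a - vec_lincomb (col_feature Kx X) a'"
    using e(2) e'(2) by (simp add: vec_lincomb_diff[OF gram_mult_vec_carrier gram_mult_vec_carrier])
  hence "vec_lincomb (col_feature Kx X) (?K *\<^sub>v (e - e')) = 0"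
    using eq by (simp add: diff)
  hence "?K *\<^sub>v (?K *\<^sub>v (e - e')) = 0\<^sub>v (Suc n)"
    by (rule gram_mult_eq_0_if_vec_lincomb_eq_0[OF gram_mult_vec_carrier])
  hence zero: "a - a' = 0\<^sub>v (Suc n)"
    unfolding diff by (rule sym_mat_mult_mult_eq_0[OF gram_carrier[of Kx X n] gram_sym ee'])
  have dims: "dim_vec a = Suc n" "dim_vec a' = Suc n"
    using e(2) e'(2) by simp_all
  show "a = a'"
  proof (rule eq_vecI)
    fix i assume i: "i < dim_vec a'"
    have "(a - a') $ i = 0"
      using zero i dims by simp
    thus "a $ i = a' $ i"
      using i dims by simp
  qed (use dims in simp)
qed

context
  fixes l :: "real \<Rightarrow> real \<Rightarrow> real" and lam :: real and n :: nat and X :: "nat \<Rightarrow> 'x"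
    and Y :: "nat \<Rightarrow> real" and Kx :: "'x \<Rightarrow> 'h::{real_inner, complete_space}"
    and Ycal :: "real set" and y z :: real
  assumes lam_pos: "lam > 0"
    and Y_in: "\<forall>i\<in>{1..n}. Y i \<in> Ycal"
    and y_in: "y \<in> Ycal" and z_in: "z \<in> Ycal"
    and convex: "\<forall>w\<in>Ycal. convex_on UNIV (l w)"
    and diff1: "\<forall>w\<in>Ycal. \<forall>u. (l w has_real_derivative deriv (l w) u) (at u)"
    and diff2: "\<forall>w\<in>Ycal. \<forall>u. (deriv (l w) has_real_derivative deriv (deriv (l w)) u) (at u)"
begin

lemma smooth_convex_reg_risk_aug:
  "smooth_convex_reg_risk {..<Suc (Suc n)} (aug_weight n (uvec n)) (aug_loss l n Y y z) lam"
proof -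
  define label where "label i = (if i < n then Y (Suc i) else if i = n then z else y)" for i
  have loss: "aug_loss l n Y y z i = l (label i)" for i
    by (simp add: aug_loss_def label_def)
  have "label i \<in> Ycal" if "i < Suc (Suc n)" for i
    using that Y_in y_in z_in by (auto simp: label_def)
  thus ?thesis
    using lam_pos convex diff1 diff2 unfolding loss
    by unfold_locales (auto simp: aug_weight_def uvec_def)
qed

lemma fhat_min: "\<forall>h. Rbold l lam n X Y Kx y z (uvec n) (fhat l lam n X Y Kx y z) \<le> Rbold l lam n X Y Kx y z (uvec n) h"
  and fhat_unique: "\<forall>h. Rbold l lam n X Y Kx y z (uvec n) f \<le> Rbold l lam n X Y Kx y z (uvec n) h
      \<Longrightarrow> f = fhat l lam n X Y Kx y z"
proof -
  have "\<exists>!f. \<forall>h. Rbold l lam n X Y Kx y z (uvec n) f \<le> Rbold l lam n X Y Kx y z (uvec n) h"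
    unfolding Rbold_eq_reg_risk
    using reg_risk_unique_min smooth_convex_reg_risk_aug smooth_convex_reg_risk.axioms(1) by blast
  thus "\<forall>h. Rbold l lam n X Y Kx y z (uvec n) (fhat l lam n X Y Kx y z) \<le> Rbold l lam n X Y Kx y z (uvec n) h"
    and "\<forall>h. Rbold l lam n X Y Kx y z (uvec n) f \<le> Rbold l lam n X Y Kx y z (uvec n) h
      \<Longrightarrow> f = fhat l lam n X Y Kx y z"
    unfolding fhat_def by (rule theI', rule the1_equality[symmetric])
qed

lemma fhat_in_span: "fhat l lam n X Y Kx y z \<in> span (col_feature Kx X ` {..<Suc n})"
proof -
  interpret smooth_convex_reg_risk "{..<Suc (Suc n)}" "aug_weight n (uvec n)" "aug_loss l n Y y z"
    "aug_feature Kx X n" lam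
    by (rule smooth_convex_reg_risk_aug)
  show ?thesis
    using reg_risk_min_in_span fhat_min unfolding Rbold_eq_reg_risk aug_feature_image by blast
qed

lemma ahat_in_mat_range_and_lincomb:
  "ahat l lam n X Y Kx y z \<in> mat_range (Suc n) (gram Kx X n)
   \<and> vec_lincomb (col_feature Kx X) (ahat l lam n X Y Kx y z) = fhat l lam n X Y Kx y z"
proof -
  let ?f = "fhat l lam n X Y Kx y z" and ?K = "gram Kx X n" and ?k = "col_feature Kx X"
  let ?R = "Rbold l lam n X Y Kx y z (uvec n)" and ?G = "Rhat l lam n X Y Kx y z (uvec n)"
  have carrier: "b \<in> carrier_vec (Suc n)" if "b \<in> mat_range (Suc n) ?K" for b
    using that unfolding mat_range_def by auto
  have G_R: "?G b = ?R (vec_lincomb ?k b)" if "b \<in> mat_range (Suc n) ?K" for b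
    using Rhat_eq_Rbold[OF carrier[OF that]] .
  \<comment> \<open>the Gram matrix maps coefficients \<open>c\<close> to the coefficients of the frame operator applied to \<open>\<Sum> c\<^sub>j k\<^sub>j\<close>\<close>
  have onto: "frame_op {..<Suc n} (\<lambda>_. 1) ?k ` span (?k ` {..<Suc n}) = span (?k ` {..<Suc n})"
    by (rule frame_op_onto_span) auto
  from fhat_in_span have "?f \<in> frame_op {..<Suc n} (\<lambda>_. 1) ?k ` span (?k ` {..<Suc n})"
    unfolding onto .
  then obtain p where p: "?f = frame_op {..<Suc n} (\<lambda>_. 1) ?k p" "p \<in> span (?k ` {..<Suc n})"
    by (rule imageE)
  obtain c where c: "c \<in> carrier_vec (Suc n)" "vec_lincomb ?k c = p"
    using span_eq_vec_lincomb[OF p(2)] by blast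
  have a_f: "vec_lincomb ?k (?K *\<^sub>v c) = ?f"
    using vec_lincomb_gram_mult[OF c(1), of Kx X] c(2) p(1) by simp
  have a_range: "?K *\<^sub>v c \<in> mat_range (Suc n) ?K"
    using c(1) unfolding mat_range_def by blast
  have a_min: "?G (?K *\<^sub>v c) \<le> ?G b" if "b \<in> mat_range (Suc n) ?K" for b
    using fhat_min G_R[OF that] G_R[OF a_range] a_f by simp
  have uniq: "a' = ?K *\<^sub>v c"
    if "a' \<in> mat_range (Suc n) ?K \<and> (\<forall>b\<in>mat_range (Suc n) ?K. ?G a' \<le> ?G b)" for a'
  proof -
    have a': "a' \<in> mat_range (Suc n) ?K" "\<forall>b\<in>mat_range (Suc n) ?K. ?G a' \<le> ?G b"
      using that by auto
    have "?R (vec_lincomb ?k a') \<le> ?R ?f"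
      using a'(2) a_range G_R[OF a'(1)] G_R[OF a_range] a_f by fastforce
    hence "vec_lincomb ?k a' = ?f"
      using fhat_min fhat_unique order_trans by blast
    thus ?thesis
      using mat_range_gram_inj[OF a'(1) a_range] a_f by simp
  qed
  have "?K *\<^sub>v c \<in> mat_range (Suc n) ?K \<and> (\<forall>b\<in>mat_range (Suc n) ?K. ?G (?K *\<^sub>v c) \<le> ?G b)"
    using a_range a_min by blast
  hence "ahat l lam n X Y Kx y z = ?K *\<^sub>v c"
    unfolding ahat_def Suc_eq_plus1[symmetric] using uniq by (rule the_equality)
  thus ?thesis using a_range a_f by simp
qed

lemma hessian_Rhat_index:
  assumes j: "j < Suc n" and k: "k < Suc n"
  shows "hessian (Suc n) (Rhat l lam n X Y Kx y z (uvec n)) (ahat l lam n X Y Kx y z) $$ (j, k)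
    = inner (hess_op l lam n X Y Kx y z (uvec n) (fhat l lam n X Y Kx y z) (col_feature Kx X k))
        (col_feature Kx X j)"
proof -
  interpret smooth_convex_reg_risk "{..<Suc (Suc n)}" "aug_weight n (uvec n)" "aug_loss l n Y y z"
    "aug_feature Kx X n" lam
    by (rule smooth_convex_reg_risk_aug)
  let ?a = "ahat l lam n X Y Kx y z" and ?f = "fhat l lam n X Y Kx y z" and ?k = "col_feature Kx X"
  have a: "?a \<in> carrier_vec (Suc n)" "vec_lincomb ?k ?a = ?f"
    using ahat_in_mat_range_and_lincomb unfolding mat_range_def by auto
  have line: "Rhat l lam n X Y Kx y z (uvec n) (?a + t \<cdot>\<^sub>v unit_vec (Suc n) j + s \<cdot>\<^sub>v unit_vec (Suc n) k)
      = R (?f + t *\<^sub>R ?k j + s *\<^sub>R ?k k)" for s t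
  proof -
    have "?a + t \<cdot>\<^sub>v unit_vec (Suc n) j + s \<cdot>\<^sub>v unit_vec (Suc n) k \<in> carrier_vec (Suc n)"
      using a(1) by simp
    moreover have "vec_lincomb ?k (?a + t \<cdot>\<^sub>v unit_vec (Suc n) j + s \<cdot>\<^sub>v unit_vec (Suc n) k)
        = ?f + t *\<^sub>R ?k j + s *\<^sub>R ?k k"
      using a j k by (simp add: vec_lincomb_add[of _ "Suc n"] vec_lincomb_smult vec_lincomb_unit_vec)
    ultimately show ?thesis
      by (simp only: Rhat_eq_Rbold Rbold_eq_reg_risk)
  qed
  have "hessian (Suc n) (Rhat l lam n X Y Kx y z (uvec n)) ?a $$ (j, k)
      = deriv (\<lambda>s. deriv (\<lambda>t. Rhat l lam n X Y Kx y z (uvec n)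
          (?a + t \<cdot>\<^sub>v unit_vec (Suc n) j + s \<cdot>\<^sub>v unit_vec (Suc n) k)) 0) 0"
    using j k by (simp add: hessian_def)
  also have "\<dots> = deriv (\<lambda>s. deriv (\<lambda>t. R (?f + t *\<^sub>R ?k j + s *\<^sub>R ?k k)) 0) 0"
    by (simp only: line)
  also have "\<dots> = inner (T ?f (?k k)) (?k j)"
    by (rule reg_risk_second_directional_deriv)
  finally show ?thesis
    by (simp only: hess_op_eq_reg_risk_hess)
qed

lemma hessian_Rhat_carrier:
  "hessian (Suc n) (Rhat l lam n X Y Kx y z (uvec n)) (ahat l lam n X Y Kx y z) \<in> carrier_mat (Suc n) (Suc n)"
  by (simp add: hessian_def)

lemma hessian_Rhat_sym:
  "transpose_mat (hessian (Suc n) (Rhat l lam n X Y Kx y z (uvec n)) (ahat l lam n X Y Kx y z))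
    = hessian (Suc n) (Rhat l lam n X Y Kx y z (uvec n)) (ahat l lam n X Y Kx y z)"
    (is "transpose_mat ?H = ?H")
proof -
  interpret smooth_convex_reg_risk "{..<Suc (Suc n)}" "aug_weight n (uvec n)" "aug_loss l n Y y z"
    "aug_feature Kx X n" lam
    by (rule smooth_convex_reg_risk_aug)
  let ?T = "T (fhat l lam n X Y Kx y z)" and ?k = "col_feature Kx X"
  show ?thesis
  proof (rule eq_matI)
    fix j k assume "j < dim_row ?H" "k < dim_col ?H"
    hence jk: "j < Suc n" "k < Suc n"
      using hessian_Rhat_carrier by auto
    have "transpose_mat ?H $$ (j, k) = inner (?T (?k j)) (?k k)"
      using jk hessian_Rhat_carrier by (simp add: hessian_Rhat_index hess_op_eq_reg_risk_hess)
    also have "\<dots> = inner (?k j) (?T (?k k))"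
      by (rule reg_risk_hess_sym)
    also have "\<dots> = inner (?T (?k k)) (?k j)"
      by (rule inner_commute)
    also have "\<dots> = ?H $$ (j, k)"
      using jk by (simp add: hessian_Rhat_index hess_op_eq_reg_risk_hess)
    finally show "transpose_mat ?H $$ (j, k) = ?H $$ (j, k)" .
  qed (use hessian_Rhat_carrier in auto)
qed

lemma hessian_Rhat_mult_vec_index:
  assumes b: "b \<in> carrier_vec (Suc n)" and j: "j < Suc n"
  shows "(hessian (Suc n) (Rhat l lam n X Y Kx y z (uvec n)) (ahat l lam n X Y Kx y z) *\<^sub>v b) $ j
    = inner (col_feature Kx X j)
        (hess_op l lam n X Y Kx y z (uvec n) (fhat l lam n X Y Kx y z) (vec_lincomb (col_feature Kx X) b))"
proof -
  interpret smooth_convex_reg_risk "{..<Suc (Suc n)}" "aug_weight n (uvec n)" "aug_loss l n Y y z"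
    "aug_feature Kx X n" lam
    by (rule smooth_convex_reg_risk_aug)
  let ?H = "hessian (Suc n) (Rhat l lam n X Y Kx y z (uvec n)) (ahat l lam n X Y Kx y z)"
  let ?T = "T (fhat l lam n X Y Kx y z)" and ?k = "col_feature Kx X"
  have "(?H *\<^sub>v b) $ j = (\<Sum>i<Suc n. ?H $$ (j, i) * b $ i)"
    using b j hessian_Rhat_carrier by (simp add: scalar_prod_def atLeast0LessThan del: sum.lessThan_Suc)
  also have "\<dots> = inner (\<Sum>i<Suc n. b $ i *\<^sub>R ?T (?k i)) (?k j)"
    using j by (simp add: hessian_Rhat_index hess_op_eq_reg_risk_hess inner_sum_left mult.commute
        del: sum.lessThan_Suc)
  also have "(\<Sum>i<Suc n. b $ i *\<^sub>R ?T (?k i)) = ?T (vec_lincomb ?k b)"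
    using b by (simp add: vec_lincomb_def linear_sum[OF linear_reg_risk_hess] linear_scale[OF linear_reg_risk_hess]
        del: sum.lessThan_Suc)
  finally show ?thesis
    by (simp add: hess_op_eq_reg_risk_hess inner_commute)
qed

lemma hessian_Rhat_pinv_carrier:
  "mp_pinv (Suc n) (hessian (Suc n) (Rhat l lam n X Y Kx y z (uvec n)) (ahat l lam n X Y Kx y z))
    \<in> carrier_mat (Suc n) (Suc n)"
  using mp_pinv_is_mp_pinv[OF hessian_Rhat_carrier hessian_Rhat_sym] unfolding is_mp_pinv_def by blast

lemma restr_inv_hess_op_eq:
  "restr_inv (hess_op l lam n X Y Kx y z (uvec n) (fhat l lam n X Y Kx y z))
      (span (col_feature Kx X ` {..<Suc n})) (col_feature Kx X n)
    = vec_lincomb (col_feature Kx X)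
        (mp_pinv (Suc n) (hessian (Suc n) (Rhat l lam n X Y Kx y z (uvec n)) (ahat l lam n X Y Kx y z))
          *\<^sub>v col (gram Kx X n) n)"
proof -
  interpret smooth_convex_reg_risk "{..<Suc (Suc n)}" "aug_weight n (uvec n)" "aug_loss l n Y y z"
    "aug_feature Kx X n" lam
    by (rule smooth_convex_reg_risk_aug)
  let ?f = "fhat l lam n X Y Kx y z" and ?k = "col_feature Kx X"
  let ?S = "span (?k ` {..<Suc n})" and ?x = "col (gram Kx X n) n"
  let ?H = "hessian (Suc n) (Rhat l lam n X Y Kx y z (uvec n)) (ahat l lam n X Y Kx y z)"
  let ?b = "mp_pinv (Suc n) ?H *\<^sub>v ?x"
  have T_eq: "hess_op l lam n X Y Kx y z (uvec n) ?f = T ?f"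
    by (simp only: hess_op_eq_reg_risk_hess)
  have into: "T ?f h \<in> ?S" if "h \<in> ?S" for h
    using reg_risk_hess_onto_span[of ?f] that unfolding aug_feature_image by blast
  have "?k n \<in> T ?f ` ?S"
    using reg_risk_hess_onto_span[of ?f] unfolding aug_feature_image by (simp add: span_base)
  then obtain g where g: "?k n = T ?f g" "g \<in> ?S"
    by (rule imageE)
  obtain c where c: "c \<in> carrier_vec (Suc n)" "vec_lincomb ?k c = g"
    using span_eq_vec_lincomb[OF g(2)] by blast
  have x_index: "?x $ j = inner (?k j) (?k n)" if "j < Suc n" for j
    using that by (simp add: gram_index)
  have "(?H *\<^sub>v c) $ j = ?x $ j" if "j < Suc n" for j
    using hessian_Rhat_mult_vec_index[OF c(1) that] c(2) g(1) T_eq x_index[OF that] by simp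
  hence "?H *\<^sub>v c = ?x"
    using hessian_Rhat_carrier by (intro eq_vecI) auto
  hence Hb: "?H *\<^sub>v ?b = ?x"
    using mp_pinv_mult_range[OF hessian_Rhat_carrier hessian_Rhat_sym c(1)] by simp
  note hessian_Rhat_pinv_carrier
  moreover have "?x \<in> carrier_vec (Suc n)"
    by (rule gram_col_carrier)
  ultimately have b: "?b \<in> carrier_vec (Suc n)"
    by (rule mult_mat_vec_carrier)
  hence "dim_vec ?b = Suc n" by (rule carrier_vecD)
  hence b_span: "vec_lincomb ?k ?b \<in> ?S"
    using vec_lincomb_in_span[of ?k ?b] by (simp only:)
  \<comment> \<open>\<open>H b = x\<close> says that \<open>T (\<Sum> b\<^sub>j k\<^sub>j) - k\<^sub>n\<close> is orthogonal to every \<open>k\<^sub>j\<close>\<close>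
  have "T ?f (vec_lincomb ?k ?b) - ?k n = 0"
  proof (rule orthogonal_to_span_eq_0)
    show "T ?f (vec_lincomb ?k ?b) - ?k n \<in> ?S"
      using into[OF b_span] by (intro span_diff) (auto simp: span_base)
    fix s assume "s \<in> ?k ` {..<Suc n}"
    then obtain j where j: "j < Suc n" "s = ?k j" by blast
    have "inner (?k j) (T ?f (vec_lincomb ?k ?b)) = ?x $ j"
      using hessian_Rhat_mult_vec_index[OF b j(1)] Hb T_eq by simp
    thus "inner s (T ?f (vec_lincomb ?k ?b) - ?k n) = 0"
      using j x_index by (simp add: inner_diff_right)
  qed
  hence Tb: "T ?f (vec_lincomb ?k ?b) = ?k n" by simp
  show ?thesis
    unfolding T_eq restr_inv_def
  proof (rule the_equality)
    show "vec_lincomb ?k ?b \<in> ?S \<and> T ?f (vec_lincomb ?k ?b) = ?k n"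
      using b_span Tb by blast
    fix g' assume "g' \<in> ?S \<and> T ?f g' = ?k n"
    thus "g' = vec_lincomb ?k ?b"
      using Tb injD[OF inj_reg_risk_hess[of ?f]] by metis
  qed
qed

end

theorem lemma17:
  fixes l :: "real \<Rightarrow> real \<Rightarrow> real"
    and lam \<beta> :: real
    and n :: nat
    and X :: "nat \<Rightarrow> 'x::euclidean_space"
    and Y :: "nat \<Rightarrow> real"
    and Kx :: "'x \<Rightarrow> 'h::{real_inner, complete_space}"
    and Ycal :: "real set"
    and y z z' :: real
  assumes lam_pos: "lam > 0"
    and Y_in: "\<forall>i\<in>{1..n}. Y i \<in> Ycal"
    and y_in: "y \<in> Ycal" and z_in: "z \<in> Ycal" and z'_in: "z' \<in> Ycal"
    and convex: "\<forall>w\<in>Ycal. convex_on UNIV (l w)"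
    and diff1: "\<forall>w\<in>Ycal. \<forall>u. (l w has_real_derivative deriv (l w) u) (at u)"
    and diff2: "\<forall>w\<in>Ycal. \<forall>u. (deriv (l w) has_real_derivative deriv (deriv (l w)) u) (at u)"
    and cont2: "\<forall>w\<in>Ycal. continuous_on UNIV (deriv (deriv (l w)))"
    and lip: "\<forall>w\<in>Ycal. \<beta>-lipschitz_on UNIV (deriv (l w))"
  shows "Ibold l lam n X Y Kx y z z' =
           (\<Sum>i=1..n+1. (Ivec l lam n X Y Kx y z z' $ (i-1)) *\<^sub>R Kx (X i))"
proof -
  note hyps = lam_pos Y_in y_in z_in convex diff1 diff2
  let ?f = "fhat l lam n X Y Kx y z" and ?a = "ahat l lam n X Y Kx y z"
  let ?K = "gram Kx X n" and ?k = "col_feature Kx X"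
  let ?b = "mp_pinv (Suc n) (hessian (Suc n) (Rhat l lam n X Y Kx y z (uvec n)) ?a) *\<^sub>v col ?K n"
  define c where "c = - (1 / real (n+1)) * deriv (l z') (evalH ?f Kx (X (n+1)))"
  have a: "?a \<in> carrier_vec (Suc n)" "vec_lincomb ?k ?a = ?f"
    using ahat_in_mat_range_and_lincomb[OF hyps, where X = X and Kx = Kx] unfolding mat_range_def by auto
  have "?a \<bullet> col ?K n = evalH ?f Kx (X (n+1))"
    using scalar_prod_col_gram[OF a(1), of n Kx X] a(2) by (simp add: evalH_def col_feature_def)
  hence Iv: "Ivec l lam n X Y Kx y z z' = c \<cdot>\<^sub>v ?b"
    unfolding Ivec_def Let_def c_def by simp
  have Ib: "Ibold l lam n X Y Kx y z z' = c *\<^sub>R vec_lincomb ?k ?b"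
    using restr_inv_hess_op_eq[OF hyps, where X = X and Kx = Kx]
    unfolding Ibold_def Let_def c_def col_feature_image by (simp add: col_feature_def)
  have "?b \<in> carrier_vec (Suc n)"
    using hessian_Rhat_pinv_carrier[OF hyps, where X = X and Kx = Kx] gram_col_carrier
    by (rule mult_mat_vec_carrier)
  have "c *\<^sub>R vec_lincomb ?k ?b = vec_lincomb ?k (c \<cdot>\<^sub>v ?b)"
    by (simp only: vec_lincomb_smult)
  also have "\<dots> = (\<Sum>i=1..n+1. (c \<cdot>\<^sub>v ?b) $ (i - 1) *\<^sub>R Kx (X i))"
    using \<open>?b \<in> carrier_vec (Suc n)\<close> by (intro vec_lincomb_col_feature) simp
  finally show ?thesis
    unfolding Ib Iv .
qed

end
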